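(* Let $M\ge1$, $N\ge0$, and let $v_1,\dots,v_N$ be nonzero complex numbers with $v_j^{-2}\neq\beta$; put $z_j=(v_j^{-2}-\beta)^{-1}$. For every tuple $\{n\}=(n_0,\dots,n_{M-1})$ of nonnegative integers with $\sum_kn_k=N$ and associated partition $\lambda$, $$\langle\{n\}|\Psi(\{v\}_N)\rangle=\prod_{j=1}^N(v_j^{-1}-\beta v_j)^{M-1}\,G_\lambda(z_1,\dots,z_N;\beta),\qquad \langle\Psi(\{v\}_N)|\{n\}\rangle=\prod_{j=1}^N(v_j^{-1}-\beta v_j)^{M-1}\,G_{\lambda^\vee}(z_1,\dots,z_N;\beta),$$ where $\lambda^\vee_j=M-1-\lambda_{N+1-j}$ (whenever the $z_j$ are pairwise distinct; otherwise by polynomial continuation).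
   Context: Non-Hermitian phase model: $\beta\in\mathbb{C}$. $\mathcal{F}$ is the Fock space with orthonormal basis $|n\rangle$ ($n\ge0$); $\phi|n\rangle=|n-1\rangle$, $\phi|0\rangle=0$, $\phi^\dagger|n\rangle=|n+1\rangle$, $\pi|n\rangle=\delta_{n,0}|n\rangle$. Sites $0,\dots,M-1$ carry $\mathcal{F}_0,\dots,\mathcal{F}_{M-1}$. With $W_a=\mathbb{C}^2$ (basis $|0\rangle_a,|1\rangle_a$), $\mathcal{L}_{aj}(v)=\begin{pmatrix}v^{-1}-\beta v\pi_j&\phi_j^\dagger\\ \phi_j&v\end{pmatrix}$ (rows/columns indexed by $0,1$ in $W_a$), $\mathcal{T}_a(v)=\mathcal{L}_{a,M-1}(v)\cdots\mathcal{L}_{a,0}(v)=\begin{pmatrix}\mathcal{A}&\mathcal{B}\\ \mathcal{C}&\mathcal{D}\end{pmatrix}(v)$. Vacuum $|\Omega\rangle=\otimes_j|0\rangle_j$; $|\Psi(\{v\}_N)\rangle=\prod_{j=1}^N\mathcal{B}(v_j)|\Omega\rangle$, $\langle\Psi(\{v\}_N)|=\langle\Omega|\prod_{j=1}^N\mathcal{C}(v_j)$. $|\{n\}\rangle=\otimes_{j=0}^{M-1}|n_j\rangle_j$. The partition associated with $\{n\}$ is the weakly decreasing length-$N$ sequence $\lambda=((M-1)^{n_{M-1}},\dots,1^{n_1},0^{n_0})$. Grothendieck polynomial: $G_\lambda(z_1,\dots,z_N;\beta)=\det_{1\le j,k\le N}\big(z_j^{\lambda_k+N-k}(1+\beta z_j)^{k-1}\big)/\prod_{1\le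 j<k\le N}(z_j-z_k)$. *)

theory Defs
  imports "HOL-Analysis.Analysis" "Jordan_Normal_Form.Determinant"
begin

(* States of the M-site Fock space: coefficient functions on occupation
   configurations {n} = [n_0,...,n_(M-1)] (lists of length M).
   Operators act on coefficient functions; <{n}|psi> = psi {n}. *)
type_synonym fvec = "nat list \<Rightarrow> complex"
type_synonym fop = "fvec \<Rightarrow> fvec"

(* phi_j |n> = |n - e_j>  (0 if n_j = 0) *)
definition phi_op :: "nat \<Rightarrow> fop" where
  "phi_op j \<psi> = (\<lambda>n. \<psi> (n[j := n ! j + 1]))"

(* phi_j^dagger |n> = |n + e_j> *)
definition phid_op :: "nat \<Rightarrow> fop" where
  "phid_op j \<psi> = (\<lambda>n. if n ! j = 0 then 0 else \<psi> (n[j := n ! j - 1]))"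

definition pi_op :: "nat \<Rightarrow> fop" where
  "pi_op j \<psi> = (\<lambda>n. if n ! j = 0 then \<psi> n else 0)"

definition Lop :: "complex \<Rightarrow> nat \<Rightarrow> complex \<Rightarrow> nat \<Rightarrow> nat \<Rightarrow> fop" where
  "Lop \<beta> j v a b =
     (if a = 0 \<and> b = 0 then (\<lambda>\<psi> n. inverse v * \<psi> n - \<beta> * v * pi_op j \<psi> n)
      else if a = 0 then phid_op j
      else if b = 0 then phi_op j
      else (\<lambda>\<psi> n. v * \<psi> n))"

definition opmat_mult :: "(nat \<Rightarrow> nat \<Rightarrow> fop) \<Rightarrow> (nat \<Rightarrow> nat \<Rightarrow> fop) \<Rightarrow> nat \<Rightarrow> nat \<Rightarrow> fop" where
  "opmat_mult X Y a b = (\<lambda>\<psi> n. \<Sum>c<2. X a c (Y c b \<psi>) n)"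

fun monodromy :: "complex \<Rightarrow> nat \<Rightarrow> complex \<Rightarrow> nat \<Rightarrow> nat \<Rightarrow> fop" where
  "monodromy \<beta> 0 v = (\<lambda>a b. if a = b then (\<lambda>\<psi>. \<psi>) else (\<lambda>\<psi> n. 0))"
| "monodromy \<beta> (Suc m) v = opmat_mult (Lop \<beta> m v) (monodromy \<beta> m v)"

definition Bop :: "complex \<Rightarrow> nat \<Rightarrow> complex \<Rightarrow> fop" where
  "Bop \<beta> M v = monodromy \<beta> M v 0 1"

definition Cop :: "complex \<Rightarrow> nat \<Rightarrow> complex \<Rightarrow> fop" where
  "Cop \<beta> M v = monodromy \<beta> M v 1 0"

definition ket :: "nat list \<Rightarrow> fvec" where
  "ket m = (\<lambda>n. if n = m then 1 else 0)"

definition vacuum :: "nat \<Rightarrow> fvec" where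
  "vacuum M = ket (replicate M 0)"

(* |Psi({v}_N)> = B(v_1) ... B(v_N) |Omega>, with v_1..v_N stored as v 0 .. v (N-1) *)
definition Psi_ket :: "complex \<Rightarrow> nat \<Rightarrow> nat \<Rightarrow> (nat \<Rightarrow> complex) \<Rightarrow> fvec" where
  "Psi_ket \<beta> M N v = foldr (\<lambda>j \<psi>. Bop \<beta> M (v j) \<psi>) [0..<N] (vacuum M)"

definition amp_ket :: "complex \<Rightarrow> nat \<Rightarrow> nat \<Rightarrow> (nat \<Rightarrow> complex) \<Rightarrow> nat list \<Rightarrow> complex" where
  "amp_ket \<beta> M N v n = Psi_ket \<beta> M N v n"

(* <Psi({v}_N)|{n}> = <Omega| C(v_1) ... C(v_N) |{n}> *)
definition amp_bra :: "complex \<Rightarrow> nat \<Rightarrow> nat \<Rightarrow> (nat \<Rightarrow> complex) \<Rightarrow> nat list \<Rightarrow> complex" where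
  "amp_bra \<beta> M N v n = foldr (\<lambda>j \<psi>. Cop \<beta> M (v j) \<psi>) [0..<N] (ket n) (replicate M 0)"

(* partition ((M-1)^{n_{M-1}}, ..., 1^{n_1}, 0^{n_0}) as a weakly decreasing list;
   lambda_k (1-based) is entry k-1 *)
definition partition_of :: "nat list \<Rightarrow> nat list" where
  "partition_of n = concat (map (\<lambda>k. replicate (n ! k) k) (rev [0..<length n]))"

definition dual_partition :: "nat \<Rightarrow> nat list \<Rightarrow> nat list" where
  "dual_partition M lam = map (\<lambda>x. M - 1 - x) (rev lam)"

definition vandermonde :: "nat \<Rightarrow> (nat \<Rightarrow> complex) \<Rightarrow> complex" where
  "vandermonde N z = (\<Prod>(j,k) \<in> {(j,k). j < k \<and> k < N}. z j - z k)"

definition groth_ratio :: "nat \<Rightarrow> nat list \<Rightarrow> complex \<Rightarrow> (nat \<Rightarrow> complex) \<Rightarrow> complex" where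
  "groth_ratio N lam \<beta> z =
     det (mat N N (\<lambda>(j,k). z j ^ (lam ! k + (N - 1 - k)) * (1 + \<beta> * z j) ^ k)) / vandermonde N z"

(* Grothendieck polynomial G_lam(z_1..z_N; beta): the ratio for pairwise distinct z,
   and its (polynomial, hence continuous) continuation otherwise, given as the limit
   over pairwise distinct points (only the first N coordinates vary). *)
definition grothendieck :: "nat \<Rightarrow> nat list \<Rightarrow> complex \<Rightarrow> (nat \<Rightarrow> complex) \<Rightarrow> complex" where
  "grothendieck N lam \<beta> z =
     (if inj_on z {..<N} then groth_ratio N lam \<beta> z
      else Lim (at z within {w. inj_on w {..<N} \<and> (\<forall>k\<ge>N. w k = z k)})
               (groth_ratio N lam \<beta>))"

end

theory Submission
  imports Defs
begin

(*
  Since the monodromy is a product of single-site L-operators, its matrix coefficients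
  between occupation configurations factor over the sites.  Read on partitions, one row
  B(v) (or D(v)) therefore acts by a branching rule: a sum over the partitions mu
  interlacing lambda, with weights that are monomials in x = v^2 and 1 - beta x.
  Iterating over v_1, ..., v_N expresses the amplitude as an iterated branching sum.

  The bialternant det (u_i^(lambda_k + N-1-k) (1 - beta u_i)^(M-1-lambda_k)) divided by the
  Vandermonde determinant obeys the same branching rule: subtracting suitable multiples of
  neighbouring columns kills the first row except for its last entry, and the remaining
  minor expands, column by column, into exactly the interlacing sum.  The substitution
  u = z / (1 + beta z), which sends the spectral parameter z_j to v_j^2, turns this
  bialternant into the Grothendieck determinant times the prefactor; for coinciding z_j
  the identity passes to the limit because the branching sum is continuous.

  The bra amplitude reduces to the ket amplitude of the reversed configuration with the
  spectral parameters in reverse order, and reversing the configuration dualises the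
  partition.
*)

section \<open>Matrix coefficients of the monodromy\<close>

(* site_coeff beta v a b x y = <x| L_ab(v) |y> on a single site *)
definition site_coeff :: "complex \<Rightarrow> complex \<Rightarrow> nat \<Rightarrow> nat \<Rightarrow> nat \<Rightarrow> nat \<Rightarrow> complex" where
 "site_coeff \<beta> v a b x y = (if a = 0 \<and> b = 0 then (if x = y then inverse v - (if y = 0 then \<beta> * v else 0) else 0)
   else if a = 0 then (if x = Suc y then 1 else 0)
   else if b = 0 then (if Suc x = y then 1 else 0)
   else (if x = y then v else 0))"

(* mono_coeff beta v M a b n m = <n| T_ab(v) |m> for the monodromy of the first M sites *)
fun mono_coeff :: "complex \<Rightarrow> complex \<Rightarrow> nat \<Rightarrow> nat \<Rightarrow> nat \<Rightarrow> nat list \<Rightarrow> nat list \<Rightarrow> complex" where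
  "mono_coeff \<beta> v 0 a b n m = (if a = b then 1 else 0)"
| "mono_coeff \<beta> v (Suc M) a b n m = (\<Sum>c<2. site_coeff \<beta> v a c (n!M) (m!M) * mono_coeff \<beta> v M c b n m)"

definition near_confs :: "nat \<Rightarrow> nat list \<Rightarrow> nat list set" where
  "near_confs M n = {m. length m = length n \<and> (\<forall>j<M. m!j \<le> n!j + 1) \<and> (\<forall>j. M \<le> j \<longrightarrow> j < length n \<longrightarrow> m!j = n!j)}"

lemma finite_near_confs: "finite (near_confs M n)"
proof -
  have "near_confs M n \<subseteq> {xs. set xs \<subseteq> {..Max (set n) + 1} \<and> length xs = length n}"
  proof
    fix m assume m: "m \<in> near_confs M n"
    have "\<forall>x\<in>set m. x \<le> Max (set n) + 1"
    proof
      fix x assume "x \<in> set m"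
      then obtain j where j: "j < length m" "m!j = x" by (auto simp: in_set_conv_nth)
      have jn: "j < length n" using j m by (auto simp: near_confs_def)
      have "n!j \<le> Max (set n)" using jn by auto
      moreover have "m!j \<le> n!j + 1" using m jn unfolding near_confs_def
        by (cases "j < M") auto
      ultimately show "x \<le> Max (set n) + 1" using j by simp
    qed
    then show "m \<in> {xs. set xs \<subseteq> {..Max (set n) + 1} \<and> length xs = length n}"
      using m by (auto simp: near_confs_def)
  qed
  moreover have "finite {xs. set xs \<subseteq> {..Max (set n) + 1} \<and> length xs = length n}"
    by (rule finite_lists_length_eq) auto
  ultimately show ?thesis by (rule finite_subset)
qed

lemma near_confs_eq: "length n = M \<Longrightarrow> near_confs M n = {m. length m = M \<and> (\<forall>j<M. m!j \<le> n!j + 1)}"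
  by (auto simp: near_confs_def)

lemma mono_coeff_cong: "(\<And>j. j < M \<Longrightarrow> n!j = n'!j) \<Longrightarrow> (\<And>j. j < M \<Longrightarrow> m!j = m'!j) \<Longrightarrow>
   mono_coeff \<beta> v M a b n m = mono_coeff \<beta> v M a b n' m'"
  by (induction M arbitrary: a) auto

lemma sum_eq_single:
  assumes "finite A" "a \<in> A" "\<And>x. x \<in> A \<Longrightarrow> x \<noteq> a \<Longrightarrow> f x = 0"
  shows "sum f A = f a"
proof -
  have "sum f A = f a + sum f (A - {a})" using assms by (simp add: sum.remove)
  also have "sum f (A - {a}) = 0" using assms by (intro sum.neutral) auto
  finally show ?thesis by simp
qed

lemma sum_lessThan_2: "(\<Sum>c<(2::nat). f c) = f 0 + f 1"
  by (simp add: numeral_2_eq_2)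

lemma Lop_apply:
  assumes "M < length n"
  shows "Lop \<beta> M v a c \<xi> n = (\<Sum>y\<in>{..n!M+1}. site_coeff \<beta> v a c (n!M) y * \<xi> (n[M:=y]))"
proof -
  consider "a = 0 \<and> c = 0" | "a = 0 \<and> c \<noteq> 0" | "a \<noteq> 0 \<and> c = 0" | "a \<noteq> 0 \<and> c \<noteq> 0" by blast
  then show ?thesis
  proof cases
    case 1
    have "(\<Sum>y\<in>{..n!M+1}. site_coeff \<beta> v a c (n!M) y * \<xi> (n[M:=y])) = site_coeff \<beta> v a c (n!M) (n!M) * \<xi> (n[M:=n!M])"
      by (rule sum_eq_single) (use 1 in \<open>auto simp: site_coeff_def\<close>)
    moreover have "Lop \<beta> M v a c \<xi> n = site_coeff \<beta> v a c (n!M) (n!M) * \<xi> n"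
      using 1 by (simp add: Lop_def site_coeff_def pi_op_def algebra_simps)
    ultimately show ?thesis by simp
  next
    case 2
    show ?thesis
    proof (cases "n!M = 0")
      case True
      then show ?thesis using 2 by (auto simp: Lop_def site_coeff_def phid_op_def intro!: sum.neutral)
    next
      case False
      have "(\<Sum>y\<in>{..n!M+1}. site_coeff \<beta> v a c (n!M) y * \<xi> (n[M:=y])) = site_coeff \<beta> v a c (n!M) (n!M - 1) * \<xi> (n[M:=n!M - 1])"
        by (rule sum_eq_single) (use 2 False in \<open>auto simp: site_coeff_def\<close>)
      then show ?thesis using 2 False by (simp add: Lop_def site_coeff_def phid_op_def)
    qed
  next
    case 3
    have "(\<Sum>y\<in>{..n!M+1}. site_coeff \<beta> v a c (n!M) y * \<xi> (n[M:=y])) = site_coeff \<beta> v a c (n!M) (n!M + 1) * \<xi> (n[M:=n!M + 1])"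
      by (rule sum_eq_single) (use 3 in \<open>auto simp: site_coeff_def\<close>)
    then show ?thesis using 3 by (simp add: Lop_def site_coeff_def phi_op_def)
  next
    case 4
    have "(\<Sum>y\<in>{..n!M+1}. site_coeff \<beta> v a c (n!M) y * \<xi> (n[M:=y])) = site_coeff \<beta> v a c (n!M) (n!M) * \<xi> (n[M:=n!M])"
      by (rule sum_eq_single) (use 4 in \<open>auto simp: site_coeff_def\<close>)
    then show ?thesis using 4 by (simp add: Lop_def site_coeff_def)
  qed
qed

lemma near_confs_Suc:
  assumes "M < length n"
  shows "near_confs (Suc M) n = (\<Union>y\<in>{..n!M+1}. near_confs M (n[M:=y]))"
proof (intro equalityI subsetI)
  fix m assume m: "m \<in> near_confs (Suc M) n"
  then have "m \<in> near_confs M (n[M:=m!M])" using assms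
    by (auto simp: near_confs_def nth_list_update less_Suc_eq)
  moreover have "m!M \<le> n!M + 1" using m by (auto simp: near_confs_def)
  ultimately show "m \<in> (\<Union>y\<in>{..n!M+1}. near_confs M (n[M:=y]))" by auto
next
  fix m assume "m \<in> (\<Union>y\<in>{..n!M+1}. near_confs M (n[M:=y]))"
  then obtain y where y: "y \<le> n!M+1" "m \<in> near_confs M (n[M:=y])" by auto
  then show "m \<in> near_confs (Suc M) n" using assms
    by (auto simp: near_confs_def nth_list_update less_Suc_eq)
qed

lemma sum_near_confs_Suc:
  assumes "M < length n"
  shows "(\<Sum>m\<in>near_confs (Suc M) n. F m) = (\<Sum>y\<in>{..n!M+1}. \<Sum>m\<in>near_confs M (n[M:=y]). F m)"
proof -
  have "\<forall>y\<in>{..n!M+1}. \<forall>y'\<in>{..n!M+1}. y \<noteq> y' \<longrightarrow> near_confs M (n[M:=y]) \<inter> near_confs M (n[M:=y']) = {}"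
    using assms by (auto simp: near_confs_def)
  then show ?thesis
    unfolding near_confs_Suc[OF assms] by (intro sum.UNION_disjoint) (auto simp: finite_near_confs)
qed

lemma monodromy_apply:
  assumes "M \<le> length n"
  shows "monodromy \<beta> M v a b \<psi> n = (\<Sum>m\<in>near_confs M n. mono_coeff \<beta> v M a b n m * \<psi> m)"
  using assms
proof (induction M arbitrary: a n)
  case 0
  have "near_confs 0 n = {n}" by (auto simp: near_confs_def intro: nth_equalityI)
  then show ?case by simp
next
  case (Suc M)
  have M: "M < length n" using Suc.prems by simp
  have site: "m!M = y" "mono_coeff \<beta> v M c b (n[M:=y]) m = mono_coeff \<beta> v M c b n m"
    if "m \<in> near_confs M (n[M:=y])" for c y m
    using that M by (auto simp: near_confs_def intro: mono_coeff_cong)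
  have "monodromy \<beta> (Suc M) v a b \<psi> n
      = (\<Sum>c<2. \<Sum>y\<in>{..n!M+1}. site_coeff \<beta> v a c (n!M) y * monodromy \<beta> M v c b \<psi> (n[M:=y]))"
    using M by (simp add: opmat_mult_def Lop_apply)
  also have "\<dots> = (\<Sum>c<2. \<Sum>y\<in>{..n!M+1}. \<Sum>m\<in>near_confs M (n[M:=y]).
      site_coeff \<beta> v a c (n!M) (m!M) * mono_coeff \<beta> v M c b n m * \<psi> m)"
    using M site by (simp add: Suc.IH sum_distrib_left mult.assoc cong: sum.cong)
  also have "\<dots> = (\<Sum>m\<in>near_confs (Suc M) n. mono_coeff \<beta> v (Suc M) a b n m * \<psi> m)"
    by (simp add: sum_near_confs_Suc[OF M] sum.swap[of _ "{..<2}"] sum_distrib_right)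
  finally show ?case .
qed

lemma site_coeff_nonzero: "site_coeff \<beta> v a b x y \<noteq> 0 \<Longrightarrow> x \<le> y + 1 \<and> y \<le> x + 1"
  by (auto simp: site_coeff_def split: if_splits)

lemma site_coeff_swap: "site_coeff \<beta> v a b x y = site_coeff \<beta> v b a y x"
  by (auto simp: site_coeff_def)

lemma mono_coeff_nonzero: "mono_coeff \<beta> v M a b n m \<noteq> 0 \<Longrightarrow> j < M \<Longrightarrow> n!j \<le> m!j + 1 \<and> m!j \<le> n!j + 1"
proof (induction M arbitrary: a)
  case 0 then show ?case by simp
next
  case (Suc M)
  have "(\<Sum>c<2. site_coeff \<beta> v a c (n!M) (m!M) * mono_coeff \<beta> v M c b n m) \<noteq> 0" using Suc.prems(1) by simp
  then obtain c where c: "site_coeff \<beta> v a c (n!M) (m!M) * mono_coeff \<beta> v M c b n m \<noteq> 0"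
    by (rule sum.not_neutral_contains_not_neutral)
  show ?case
  proof (cases "j = M")
    case True then show ?thesis using c site_coeff_nonzero by fastforce
  next
    case False then show ?thesis using c Suc.IH[of c] Suc.prems(2) by auto
  qed
qed

lemma mono_coeff_Cons:
  assumes "a < 2" "b < 2"
  shows "mono_coeff \<beta> v (Suc M) a b (x#n) (y#m) = (\<Sum>c<2. mono_coeff \<beta> v M a c n m * site_coeff \<beta> v c b x y)"
  using assms(1)
proof (induction M arbitrary: a)
  case 0
  show ?case using 0 assms(2) by (cases a; cases b) (auto simp: sum_lessThan_2)
next
  case (Suc M)
  have "mono_coeff \<beta> v (Suc (Suc M)) a b (x#n) (y#m) =
     (\<Sum>c<2. site_coeff \<beta> v a c (n!M) (m!M) * (\<Sum>d<2. mono_coeff \<beta> v M c d n m * site_coeff \<beta> v d b x y))"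
    using Suc.IH by (simp add: sum_lessThan_2)
  also have "\<dots> = (\<Sum>d<2. (\<Sum>c<2. site_coeff \<beta> v a c (n!M) (m!M) * mono_coeff \<beta> v M c d n m) * site_coeff \<beta> v d b x y)"
    unfolding sum_lessThan_2 by (simp only: distrib_left distrib_right mult.assoc add_ac)
  finally show ?case by simp
qed

lemma mono_coeff_rev:
  "a < 2 \<Longrightarrow> b < 2 \<Longrightarrow> length n = M \<Longrightarrow> length m = M \<Longrightarrow> mono_coeff \<beta> v M a b n m = mono_coeff \<beta> v M b a (rev m) (rev n)"
proof (induction M arbitrary: a b n m)
  case 0 then show ?case by auto
next
  case (Suc M)
  obtain n0 x where n: "n = n0 @ [x]" using Suc.prems(3) by (cases n rule: rev_cases) auto
  obtain m0 y where m: "m = m0 @ [y]" using Suc.prems(4) by (cases m rule: rev_cases) auto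
  have l: "length n0 = M" "length m0 = M" using n m Suc.prems by auto
  have c1: "mono_coeff \<beta> v M c b (n0@[x]) (m0@[y]) = mono_coeff \<beta> v M c b n0 m0" for c
    by (rule mono_coeff_cong) (use l in \<open>auto simp: nth_append\<close>)
  have "mono_coeff \<beta> v (Suc M) a b n m = (\<Sum>c<2. site_coeff \<beta> v a c x y * mono_coeff \<beta> v M c b n0 m0)"
    using l by (simp add: c1 n m nth_append)
  also have "\<dots> = (\<Sum>c<2. mono_coeff \<beta> v M b c (rev m0) (rev n0) * site_coeff \<beta> v c a y x)"
    using Suc.IH[OF _ _ l] Suc.prems(1,2) by (simp add: sum_lessThan_2 site_coeff_swap[of \<beta> v a _ x y] mult.commute)
  also have "\<dots> = mono_coeff \<beta> v (Suc M) b a (rev m) (rev n)"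
    using Suc.prems(1,2) by (simp only: n m rev_append rev.simps append.simps mono_coeff_Cons)
  finally show ?case .
qed

lemma near_confs_snoc:
  assumes "length n = M"
  shows "near_confs (Suc M) (n @ [c]) = (\<lambda>(y, m). m @ [y]) ` ({..c+1} \<times> near_confs M n)"
proof (intro equalityI subsetI)
  fix m assume m: "m \<in> near_confs (Suc M) (n @ [c])"
  then have lm: "length m = Suc M" using assms by (simp add: near_confs_eq)
  then obtain m0 y where my: "m = m0 @ [y]" by (cases m rule: rev_cases) auto
  have "y \<le> c + 1" using m my lm assms by (auto simp: near_confs_eq nth_append dest: spec[of _ M])
  moreover have "m0 \<in> near_confs M n"
  proof -
    have "\<forall>j<M. m0 ! j \<le> n ! j + 1"
    proof (intro allI impI)
      fix j assume "j < M"
      then show "m0 ! j \<le> n ! j + 1" using m my lm assms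
        by (auto simp: near_confs_eq nth_append dest!: spec[of _ j])
    qed
    then show ?thesis using lm my assms by (simp add: near_confs_eq)
  qed
  ultimately show "m \<in> (\<lambda>(y, m). m @ [y]) ` ({..c+1} \<times> near_confs M n)" using my by auto
next
  fix m assume "m \<in> (\<lambda>(y, m). m @ [y]) ` ({..c+1} \<times> near_confs M n)"
  then obtain y m0 where "m = m0 @ [y]" "y \<le> c + 1" "m0 \<in> near_confs M n" by auto
  then show "m \<in> near_confs (Suc M) (n @ [c])" using assms
    by (auto simp: near_confs_eq nth_append less_Suc_eq)
qed

lemma sum_near_confs_snoc:
  assumes "length n = M"
  shows "(\<Sum>m\<in>near_confs (Suc M) (n @ [c]). F m) = (\<Sum>y\<in>{..c+1}. \<Sum>m\<in>near_confs M n. F (m @ [y]))"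
proof -
  have inj: "inj_on (\<lambda>(y, m). m @ [y]) ({..c+1} \<times> near_confs M n)" by (auto simp: inj_on_def)
  have "(\<Sum>m\<in>near_confs (Suc M) (n @ [c]). F m) = sum (F \<circ> (\<lambda>(y, m). m @ [y])) ({..c+1} \<times> near_confs M n)"
    unfolding near_confs_snoc[OF assms] by (rule sum.reindex[OF inj])
  also have "\<dots> = (\<Sum>(y, m)\<in>{..c+1} \<times> near_confs M n. F (m @ [y]))"
    by (rule sum.cong) auto
  also have "\<dots> = (\<Sum>y\<in>{..c+1}. \<Sum>m\<in>near_confs M n. F (m @ [y]))"
    by (rule sum.cartesian_product[symmetric])
  finally show ?thesis .
qed

lemma mono_coeff_snoc:
  assumes "length n = M" "length m = M"
  shows "mono_coeff \<beta> v (Suc M) a b (n @ [c]) (m @ [y]) = (\<Sum>d<2. site_coeff \<beta> v a d c y * mono_coeff \<beta> v M d b n m)"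
proof -
  have "mono_coeff \<beta> v M d b (n @ [c]) (m @ [y]) = mono_coeff \<beta> v M d b n m" for d
    by (rule mono_coeff_cong) (use assms in \<open>auto simp: nth_append\<close>)
  then show ?thesis using assms by (simp add: nth_append)
qed

lemma monodromy_snoc:
  assumes "length n = M"
  shows "monodromy \<beta> (Suc M) v a b \<psi> (n @ [c]) =
    (\<Sum>d<2. \<Sum>y\<in>{..c+1}. site_coeff \<beta> v a d c y * monodromy \<beta> M v d b (\<lambda>m. \<psi> (m @ [y])) n)"
proof -
  have "monodromy \<beta> (Suc M) v a b \<psi> (n @ [c]) =
      (\<Sum>m\<in>near_confs (Suc M) (n @ [c]). mono_coeff \<beta> v (Suc M) a b (n @ [c]) m * \<psi> m)"
    by (rule monodromy_apply) (simp add: assms)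
  also have "\<dots> = (\<Sum>y\<in>{..c+1}. \<Sum>m\<in>near_confs M n. mono_coeff \<beta> v (Suc M) a b (n @ [c]) (m @ [y]) * \<psi> (m @ [y]))"
    by (rule sum_near_confs_snoc[OF assms])
  also have "\<dots> = (\<Sum>y\<in>{..c+1}. \<Sum>m\<in>near_confs M n.
      (\<Sum>d<2. site_coeff \<beta> v a d c y * mono_coeff \<beta> v M d b n m) * \<psi> (m @ [y]))"
    using assms by (intro sum.cong refl) (simp add: mono_coeff_snoc near_confs_eq del: mono_coeff.simps)
  also have "\<dots> = (\<Sum>d<2. \<Sum>y\<in>{..c+1}. site_coeff \<beta> v a d c y * monodromy \<beta> M v d b (\<lambda>m. \<psi> (m @ [y])) n)"
    using assms by (simp add: monodromy_apply sum_lessThan_2 sum.distrib sum_distrib_left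
        distrib_right mult.assoc)
  finally show ?thesis .
qed

lemma sum_site_coeff_00: "(\<Sum>y\<in>{..c+1}. site_coeff \<beta> v 0 0 c y * F y) = (inverse v - (if c = 0 then \<beta> * v else 0)) * F c"
  by (subst sum_eq_single[of _ c]) (auto simp: site_coeff_def)

lemma sum_site_coeff_01: "(\<Sum>y\<in>{..c+1}. site_coeff \<beta> v 0 1 c y * F y) = (if c = 0 then 0 else F (c - 1))"
proof (cases c)
  case 0 then show ?thesis by (auto simp: site_coeff_def intro!: sum.neutral)
next
  case (Suc c') then show ?thesis by (subst sum_eq_single[of _ c']) (auto simp: site_coeff_def)
qed

lemma sum_site_coeff_10: "(\<Sum>y\<in>{..c+1}. site_coeff \<beta> v 1 0 c y * F y) = F (c + 1)"
  by (subst sum_eq_single[of _ "c+1"]) (auto simp: site_coeff_def)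

lemma sum_site_coeff_11: "(\<Sum>y\<in>{..c+1}. site_coeff \<beta> v 1 1 c y * F y) = v * F c"
  by (subst sum_eq_single[of _ c]) (auto simp: site_coeff_def)

section \<open>One-step recursions for the amplitudes\<close>

lemma amp_ket_Suc: "amp_ket \<beta> M (Suc N) v = Bop \<beta> M (v 0) (amp_ket \<beta> M N (v \<circ> Suc))"
proof -
  have "[0..<Suc N] = 0 # map Suc [0..<N]" by (simp add: upt_conv_Cons map_Suc_upt)
  then show ?thesis by (simp add: amp_ket_def[abs_def] Psi_ket_def foldr_map o_def)
qed

definition Cop_chain :: "complex \<Rightarrow> nat \<Rightarrow> nat \<Rightarrow> (nat \<Rightarrow> complex) \<Rightarrow> fvec \<Rightarrow> fvec" where
  "Cop_chain \<beta> M N v \<psi> = foldr (\<lambda>j \<psi>. Cop \<beta> M (v j) \<psi>) [0..<N] \<psi>"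

lemma Cop_chain_Suc: "Cop_chain \<beta> M (Suc N) v \<psi> = Cop \<beta> M (v 0) (Cop_chain \<beta> M N (v \<circ> Suc) \<psi>)"
proof -
  have "[0..<Suc N] = 0 # map Suc [0..<N]" by (simp add: upt_conv_Cons map_Suc_upt)
  then show ?thesis by (simp add: Cop_chain_def foldr_map o_def)
qed

lemma Cop_chain_linear:
  assumes "finite X" "\<And>m. length m = M \<Longrightarrow> \<psi> m = (\<Sum>x\<in>X. c x * \<phi> x m)" "length n = M"
  shows "Cop_chain \<beta> M N v \<psi> n = (\<Sum>x\<in>X. c x * Cop_chain \<beta> M N v (\<phi> x) n)"
  using assms(2,3)
proof (induction N arbitrary: v n)
  case 0 then show ?case by (simp add: Cop_chain_def)
next
  case (Suc N)
  have len: "\<And>m. m \<in> near_confs M n \<Longrightarrow> length m = M" using Suc.prems by (auto simp: near_confs_def)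
  have "Cop_chain \<beta> M (Suc N) v \<psi> n = (\<Sum>m\<in>near_confs M n. mono_coeff \<beta> (v 0) M 1 0 n m * Cop_chain \<beta> M N (v \<circ> Suc) \<psi> m)"
    using Suc.prems by (simp add: Cop_chain_Suc Cop_def monodromy_apply)
  also have "\<dots> = (\<Sum>m\<in>near_confs M n. mono_coeff \<beta> (v 0) M 1 0 n m * (\<Sum>x\<in>X. c x * Cop_chain \<beta> M N (v \<circ> Suc) (\<phi> x) m))"
    using Suc.IH[OF Suc.prems(1)] len by (intro sum.cong) auto
  also have "\<dots> = (\<Sum>x\<in>X. c x * (\<Sum>m\<in>near_confs M n. mono_coeff \<beta> (v 0) M 1 0 n m * Cop_chain \<beta> M N (v \<circ> Suc) (\<phi> x) m))"
    by (simp add: sum_distrib_left mult.left_commute) (rule sum.swap)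
  also have "\<dots> = (\<Sum>x\<in>X. c x * Cop_chain \<beta> M (Suc N) v (\<phi> x) n)"
    using Suc.prems by (simp add: Cop_chain_Suc Cop_def monodromy_apply)
  finally show ?case .
qed

lemma amp_bra_Cop_chain: "amp_bra \<beta> M N v n = Cop_chain \<beta> M N v (ket n) (replicate M 0)"
  by (simp add: amp_bra_def Cop_chain_def)

lemma Cop_ket:
  assumes "length n = M" "length m = M"
  shows "Cop \<beta> M v (ket n) m = (\<Sum>x\<in>near_confs M n. mono_coeff \<beta> v M 1 0 x n * ket x m)"
proof -
  have "Cop \<beta> M v (ket n) m = (\<Sum>y\<in>near_confs M m. mono_coeff \<beta> v M 1 0 m y * ket n y)"
    using assms by (simp add: Cop_def monodromy_apply)
  also have "\<dots> = (if n \<in> near_confs M m then mono_coeff \<beta> v M 1 0 m n else 0)"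
    by (auto simp: ket_def finite_near_confs if_distrib cong: if_cong)
  also have "\<dots> = mono_coeff \<beta> v M 1 0 m n"
    using mono_coeff_nonzero[of \<beta> v M 1 0 m n] assms by (auto simp: near_confs_eq)
  also have "\<dots> = (\<Sum>x\<in>near_confs M n. mono_coeff \<beta> v M 1 0 x n * ket x m)"
  proof (cases "m \<in> near_confs M n")
    case True then show ?thesis by (simp add: ket_def finite_near_confs if_distrib cong: if_cong)
  next
    case False
    then obtain j where "j < M" "m!j > n!j + 1" using assms by (auto simp: near_confs_eq)
    then have "mono_coeff \<beta> v M 1 0 m n = 0" using mono_coeff_nonzero[of \<beta> v M 1 0 m n] by force
    then show ?thesis using False by (auto simp: ket_def intro!: sum.neutral)
  qed
  finally show ?thesis .
qed

lemma sum_near_confs_rev: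
  assumes "length n = M"
  shows "(\<Sum>x\<in>near_confs M n. f x) = (\<Sum>m\<in>near_confs M (rev n). f (rev m))"
proof (rule sum.reindex_bij_witness[of _ rev rev])
  fix a assume a: "a \<in> near_confs M (rev n)"
  have "rev a ! j \<le> n ! j + 1" if j: "j < M" for j
  proof -
    have "a ! (M - Suc j) \<le> rev n ! (M - Suc j) + 1" using a j assms by (auto simp: near_confs_eq)
    moreover have "rev n ! (M - Suc j) = n ! j" using j assms by (simp add: rev_nth)
    moreover have "rev a ! j = a ! (M - Suc j)" using j a assms by (simp add: rev_nth near_confs_eq)
    ultimately show ?thesis by simp
  qed
  then show "rev a \<in> near_confs M n" using a assms by (auto simp: near_confs_eq)
next
  fix a assume "a \<in> near_confs M n"
  then show "rev a \<in> near_confs M (rev n)" using assms by (auto simp: near_confs_eq rev_nth)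
qed simp_all

(* C(v_N) acts first on the ket; the reflection symmetry mono_coeff_rev trades it for a
   B-row acting on the reversed configuration. *)
lemma amp_bra_Suc:
  assumes "length n = M"
  shows "amp_bra \<beta> M (Suc N) v n = Bop \<beta> M (v N) (\<lambda>m. amp_bra \<beta> M N v (rev m)) (rev n)"
proof -
  have "[0..<Suc N] = [0..<N] @ [N]" by simp
  then have "amp_bra \<beta> M (Suc N) v n = Cop_chain \<beta> M N v (Cop \<beta> M (v N) (ket n)) (replicate M 0)"
    by (simp add: amp_bra_def Cop_chain_def)
  also have "\<dots> = (\<Sum>x\<in>near_confs M n. mono_coeff \<beta> (v N) M 1 0 x n * Cop_chain \<beta> M N v (ket x) (replicate M 0))"
    by (rule Cop_chain_linear) (simp_all add: finite_near_confs Cop_ket assms)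
  also have "\<dots> = (\<Sum>x\<in>near_confs M n. mono_coeff \<beta> (v N) M 0 1 (rev n) (rev x) * amp_bra \<beta> M N v x)"
    using assms mono_coeff_rev[of 1 0 _ M n \<beta> "v N"]
    by (intro sum.cong refl) (simp add: amp_bra_Cop_chain near_confs_eq)
  also have "\<dots> = (\<Sum>m\<in>near_confs M (rev n). mono_coeff \<beta> (v N) M 0 1 (rev n) m * amp_bra \<beta> M N v (rev m))"
    by (subst sum_near_confs_rev[OF assms]) simp
  finally show ?thesis using assms by (simp add: Bop_def monodromy_apply)
qed

section \<open>Partitions and occupation numbers\<close>

lemma partition_of_snoc:
  assumes "length n = M"
  shows "partition_of (n @ [c]) = replicate c M @ partition_of n"
proof -
  have m: "map (\<lambda>k. replicate ((n @ [c]) ! k) k) (rev [0..<M]) = map (\<lambda>k. replicate (n ! k) k) (rev [0..<M])"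
    using assms by (auto simp: nth_append)
  have c: "(n @ [c]) ! M = c" by (metis assms nth_append_length)
  have "partition_of (n @ [c]) = replicate ((n @ [c]) ! M) M @ concat (map (\<lambda>k. replicate ((n @ [c]) ! k) k) (rev [0..<M]))"
    using assms by (simp add: partition_of_def)
  also have "\<dots> = replicate c M @ partition_of n"
    unfolding m c using assms by (simp add: partition_of_def)
  finally show ?thesis .
qed

lemma partition_of_lt: "e \<in> set (partition_of n) \<Longrightarrow> e < length n"
  by (auto simp: partition_of_def)

lemma sorted_wrt_replicate: "sorted_wrt (\<ge>) (replicate c (a::nat))"
  by (induction c) auto

lemma partition_of_length_sorted:
  "length (partition_of n) = sum_list n \<and> sorted_wrt (\<ge>) (partition_of n)"
proof (induction n rule: rev_induct)
  case Nil then show ?case by (simp add: partition_of_def)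
next
  case (snoc c n)
  have p: "partition_of (n @ [c]) = replicate c (length n) @ partition_of n"
    by (rule partition_of_snoc) simp
  have lt: "\<forall>e\<in>set (partition_of n). e < length n" using partition_of_lt by blast
  show ?case using snoc lt sorted_wrt_replicate[of c "length n"] unfolding p by (auto simp: sorted_wrt_append)
qed

lemma partition_of_admissible:
  assumes "length n = M" "sum_list n = N"
  shows "length (partition_of n) = N" "sorted_wrt (\<ge>) (partition_of n)" "\<forall>e\<in>set (partition_of n). e < M"
  using partition_of_length_sorted[of n] partition_of_lt[of _ n] assms by auto

lemma partition_of_eq_Nil: "length n = M \<Longrightarrow> partition_of n = [] \<longleftrightarrow> n = replicate M 0"
proof
  assume l: "length n = M" and p: "partition_of n = []"
  have "\<forall>k<M. n ! k = 0"
  proof (intro allI impI)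
    fix k assume "k < M"
    then have "k \<in> set (rev [0..<M])" by simp
    then show "n ! k = 0" using p l by (auto simp: partition_of_def)
  qed
  then show "n = replicate M 0" using l by (intro nth_equalityI) auto
next
  assume "length n = M" "n = replicate M 0"
  then show "partition_of n = []" by (auto simp: partition_of_def)
qed

lemma rev_upt_map: "rev [0..<M] = map (\<lambda>k. M - 1 - k) [0..<M]"
  by (rule nth_equalityI) (auto simp: rev_nth)

lemma partition_of_rev:
  assumes "length n = M"
  shows "partition_of (rev n) = dual_partition M (partition_of n)"
proof -
  have "dual_partition M (partition_of n) = concat (map (\<lambda>k. replicate (n!k) (M - 1 - k)) [0..<M])"
    using assms by (simp add: dual_partition_def partition_of_def rev_concat rev_map map_concat o_def)
  also have "\<dots> = concat (map (\<lambda>k. replicate (rev n ! k) k) (rev [0..<M]))"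
  proof -
    have "map (\<lambda>k. replicate (rev n ! k) k) (rev [0..<M]) = map (\<lambda>k. replicate (n!k) (M - 1 - k)) [0..<M]"
      unfolding rev_upt_map using assms by (auto simp: rev_nth)
    then show ?thesis by simp
  qed
  also have "\<dots> = partition_of (rev n)" using assms by (simp add: partition_of_def)
  finally show ?thesis by simp
qed

definition occupation :: "nat \<Rightarrow> nat list \<Rightarrow> nat list" where
  "occupation M mu = map (\<lambda>j. count_list mu j) [0..<M]"

lemma length_occupation [simp]: "length (occupation M mu) = M"
  by (simp add: occupation_def)

lemma occupation_replicate:
  assumes "\<forall>e\<in>set mu. e < M"
  shows "occupation (Suc M) (replicate k M @ mu) = occupation M mu @ [k]"
proof -
  have "count_list mu M = 0" using assms by (induction mu) auto
  moreover have "\<And>j. j < M \<Longrightarrow> count_list (replicate k M) j = 0" by (induction k) auto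
  moreover have "count_list (replicate k M) M = k" by (induction k) auto
  ultimately show ?thesis by (auto simp: occupation_def count_list_append)
qed

lemma occupation_one_site: "occupation (Suc 0) (replicate k 0) = [k]"
proof -
  have "count_list (replicate k 0) (0::nat) = k" by (induction k) auto
  then show ?thesis by (simp add: occupation_def)
qed

lemma sorted_replicate_prefix:
  assumes "sorted_wrt (\<ge>) mu" "\<forall>e\<in>set mu. e < Suc M"
  shows "\<exists>k mu'. mu = replicate k M @ mu' \<and> sorted_wrt (\<ge>) mu' \<and> (\<forall>e\<in>set mu'. e < M)"
  using assms
proof (induction mu)
  case Nil then show ?case by (intro exI[of _ 0] exI[of _ "[]"]) simp
next
  case (Cons a r)
  show ?case
  proof (cases "a = M")
    case True
    from Cons obtain k mu' where "r = replicate k M @ mu'" "sorted_wrt (\<ge>) mu'" "\<forall>e\<in>set mu'. e < M" by auto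
    then show ?thesis using True by (intro exI[of _ "Suc k"] exI[of _ mu']) simp
  next
    case False
    then have "a < M" using Cons.prems by auto
    then have "\<forall>e\<in>set (a # r). e < M" using Cons.prems by auto
    then show ?thesis using Cons.prems by (intro exI[of _ 0] exI[of _ "a # r"]) simp
  qed
qed

lemma partition_of_occupation:
  "sorted_wrt (\<ge>) mu \<Longrightarrow> \<forall>e\<in>set mu. e < M \<Longrightarrow> partition_of (occupation M mu) = mu"
proof (induction M arbitrary: mu)
  case 0 then show ?case by (cases mu) (auto simp: occupation_def partition_of_def)
next
  case (Suc M)
  obtain k mu' where mu: "mu = replicate k M @ mu'" "sorted_wrt (\<ge>) mu'" "\<forall>e\<in>set mu'. e < M"
    using sorted_replicate_prefix[OF Suc.prems] by blast
  have "partition_of (occupation (Suc M) mu) = partition_of (occupation M mu' @ [k])"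
    using occupation_replicate[OF mu(3)] mu(1) by simp
  also have "\<dots> = replicate k M @ partition_of (occupation M mu')"
    by (rule partition_of_snoc) simp
  also have "\<dots> = mu" using Suc.IH[OF mu(2,3)] mu(1) by simp
  finally show ?case .
qed

section \<open>Branching sums over interlacing partitions\<close>

(* interlacing h r: the mu with r!k \<le> mu!k \<le> (h # r)!k, i.e. mu interlaces lambda = h # r *)
fun interlacing :: "nat \<Rightarrow> nat list \<Rightarrow> nat list set" where
  "interlacing h [] = {[]}"
| "interlacing h (a # r) = (\<lambda>(y, mu). y # mu) ` ({a..h} \<times> interlacing a r)"

(* the exponent y - a - 1 truncates to 0 when y = a *)
fun interlace_weight :: "complex \<Rightarrow> complex \<Rightarrow> nat \<Rightarrow> nat list \<Rightarrow> nat list \<Rightarrow> complex" where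
  "interlace_weight \<beta> x h (a # r) (y # mu) = x ^ (h - y) * (1 - \<beta> * x) ^ (y - a - 1) * interlace_weight \<beta> x a r mu"
| "interlace_weight \<beta> x h _ _ = 1"

(* The B- and D-rows of the monodromy, read on partitions (monodromy_row_branching);
   x stands for v^2. *)
definition branch_B :: "complex \<Rightarrow> nat \<Rightarrow> complex \<Rightarrow> nat list \<Rightarrow> (nat list \<Rightarrow> complex) \<Rightarrow> complex" where
  "branch_B \<beta> M x lam g = (case lam of [] \<Rightarrow> 0 | a # r \<Rightarrow>
      (\<Sum>mu\<in>interlacing a r. x ^ last (a # r) * (1 - \<beta> * x) ^ (M - 1 - a) * interlace_weight \<beta> x a r mu * g mu))"

definition branch_D :: "complex \<Rightarrow> nat \<Rightarrow> complex \<Rightarrow> nat list \<Rightarrow> (nat list \<Rightarrow> complex) \<Rightarrow> complex" where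
  "branch_D \<beta> M x lam g = (\<Sum>mu\<in>interlacing (M - 1) lam. x ^ Suc (last ((M - 1) # lam)) * interlace_weight \<beta> x (M - 1) lam mu * g mu)"

lemma length_interlacing: "mu \<in> interlacing h r \<Longrightarrow> length mu = length r"
  by (induction r arbitrary: h mu) auto

lemma interlacing_le: "mu \<in> interlacing h r \<Longrightarrow> e \<in> set mu \<Longrightarrow> e \<le> h"
proof (induction r arbitrary: h mu)
  case Nil then show ?case by simp
next
  case (Cons a r)
  then obtain y mu' where y: "mu = y # mu'" "a \<le> y" "y \<le> h" "mu' \<in> interlacing a r" by auto
  show ?case
  proof (cases "e = y")
    case True then show ?thesis using y by simp
  next
    case False
    then have "e \<in> set mu'" using Cons.prems y by simp
    then have "e \<le> a" using Cons.IH y by blast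
    then show ?thesis using y by simp
  qed
qed

lemma interlacing_sorted: "mu \<in> interlacing h r \<Longrightarrow> sorted_wrt (\<ge>) mu"
proof (induction r arbitrary: h mu)
  case Nil then show ?case by simp
next
  case (Cons a r)
  then obtain y mu' where y: "mu = y # mu'" "a \<le> y" "mu' \<in> interlacing a r" by auto
  have "\<forall>e\<in>set mu'. e \<le> y" using interlacing_le[OF y(3)] y(2) by fastforce
  then show ?case using Cons.IH[OF y(3)] y by simp
qed

lemma interlacing_hd_tl_lt: "\<forall>e\<in>set lam. e < M \<Longrightarrow> mu \<in> interlacing (hd lam) (tl lam) \<Longrightarrow> \<forall>e\<in>set mu. e < M"
  by (cases lam) (auto dest: interlacing_le)

lemma interlacing_lt: "M \<ge> 1 \<Longrightarrow> mu \<in> interlacing (M - 1) lam \<Longrightarrow> \<forall>e\<in>set mu. e < M"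
  by (auto dest: interlacing_le)

lemma interlacing_sorted_lt: "mu \<in> interlacing (hd lam) (tl lam) \<Longrightarrow> \<forall>e\<in>set lam. e < M \<Longrightarrow> lam \<noteq> [] \<Longrightarrow>
   sorted_wrt (\<ge>) mu \<and> (\<forall>e\<in>set mu. e < M)"
  using interlacing_sorted interlacing_hd_tl_lt by blast

lemma sum_interlacing_Cons:
  "(\<Sum>mu\<in>interlacing h (a#r). F mu) = (\<Sum>y\<in>{a..h}. \<Sum>mu\<in>interlacing a r. F (y # mu))"
proof -
  have inj: "inj_on (\<lambda>(y, mu). y # mu) ({a..h} \<times> interlacing a r)" by (auto simp: inj_on_def)
  have "(\<Sum>mu\<in>interlacing h (a#r). F mu) = sum (F \<circ> (\<lambda>(y, mu). y # mu)) ({a..h} \<times> interlacing a r)"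
    unfolding interlacing.simps by (rule sum.reindex[OF inj])
  also have "\<dots> = (\<Sum>(y, mu)\<in>{a..h} \<times> interlacing a r. F (y # mu))"
    by (rule sum.cong) auto
  also have "\<dots> = (\<Sum>y\<in>{a..h}. \<Sum>mu\<in>interlacing a r. F (y # mu))"
    by (rule sum.cartesian_product[symmetric])
  finally show ?thesis .
qed

lemma interlacing_replicate: "interlacing M (replicate c M @ r) = (\<lambda>mu. replicate c M @ mu) ` interlacing M r"
proof (induction c)
  case 0 then show ?case by simp
next
  case (Suc c)
  have "interlacing M (replicate (Suc c) M @ r) = (\<lambda>(y, mu). y # mu) ` ({M} \<times> interlacing M (replicate c M @ r))"
    by simp
  also have "\<dots> = (\<lambda>mu. replicate (Suc c) M @ mu) ` interlacing M r"
    unfolding Suc by auto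
  finally show ?case .
qed

lemma interlacing_replicate_0: "interlacing 0 (replicate c 0) = {replicate c 0}"
  using interlacing_replicate[of 0 c "[]"] by simp

lemma sum_interlacing_replicate: "(\<Sum>mu\<in>interlacing M (replicate c M @ r). F mu) = (\<Sum>mu\<in>interlacing M r. F (replicate c M @ mu))"
proof -
  have inj: "inj_on (\<lambda>mu. replicate c M @ mu) (interlacing M r)" by (auto simp: inj_on_def)
  show ?thesis unfolding interlacing_replicate by (simp add: sum.reindex[OF inj])
qed

lemma interlace_weight_replicate: "interlace_weight \<beta> x M (replicate c M @ r) (replicate c M @ mu) = interlace_weight \<beta> x M r mu"
  by (induction c) auto

lemma last_Cons_replicate: "last (M # replicate c M @ r) = last (M # r)"
  by (induction c) auto

lemma replicate_append_Cons: "replicate c M @ M # mu = M # replicate c M @ mu"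
  by (induction c) auto

lemma branch_B_cong:
  "(\<And>mu. mu \<in> interlacing (hd lam) (tl lam) \<Longrightarrow> g mu = g' mu) \<Longrightarrow> branch_B \<beta> M x lam g = branch_B \<beta> M x lam g'"
  by (cases lam) (auto simp: branch_B_def intro!: sum.cong)

lemma branch_D_cong:
  "(\<And>mu. mu \<in> interlacing (M - 1) lam \<Longrightarrow> g mu = g' mu) \<Longrightarrow> branch_D \<beta> M x lam g = branch_D \<beta> M x lam g'"
  by (auto simp: branch_D_def intro!: sum.cong)

lemma branch_B_scale: "branch_B \<beta> M x lam (\<lambda>mu. c * g mu) = c * branch_B \<beta> M x lam g"
  by (cases lam) (auto simp: branch_B_def sum_distrib_left algebra_simps)

lemma branch_B_occupation_cong:
  assumes "\<forall>e\<in>set lam. e < M" "\<And>m. length m = M \<Longrightarrow> f m = g (partition_of m)"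
  shows "branch_B \<beta> M x lam (\<lambda>mu. f (occupation M mu)) = branch_B \<beta> M x lam g"
proof (cases "lam = []")
  case True then show ?thesis by (simp add: branch_B_def)
next
  case False
  show ?thesis
  proof (rule branch_B_cong)
    fix mu assume "mu \<in> interlacing (hd lam) (tl lam)"
    then have "sorted_wrt (\<ge>) mu \<and> (\<forall>e\<in>set mu. e < M)" using interlacing_sorted_lt assms(1) False by blast
    then show "f (occupation M mu) = g mu" using assms(2) partition_of_occupation by simp
  qed
qed

lemma branch_B_Suc_low:
  assumes "\<forall>e\<in>set lam. e < M"
  shows "branch_B \<beta> (Suc M) x lam g = (1 - \<beta> * x) * branch_B \<beta> M x lam g"
proof (cases lam)
  case Nil then show ?thesis by (simp add: branch_B_def)
next
  case (Cons a r)
  then have a: "a < M" using assms by auto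
  then have e: "M - a = Suc (M - Suc a)" by simp
  show ?thesis unfolding branch_B_def Cons
    by (simp add: e sum_distrib_left algebra_simps sum_subtractf)
qed

lemma sum_interlacing_top:
  assumes "a < M"
  shows "(\<Sum>mu\<in>interlacing M (a # r). interlace_weight \<beta> x M (a # r) mu * G mu)
    = (1 - \<beta> * x) ^ (M - 1 - a) * (\<Sum>mu\<in>interlacing a r. interlace_weight \<beta> x a r mu * G (M # mu))
      + x * (\<Sum>mu\<in>interlacing (M - 1) (a # r). interlace_weight \<beta> x (M - 1) (a # r) mu * G mu)"
proof -
  let ?t = "\<lambda>y. \<Sum>mu\<in>interlacing a r. (1 - \<beta> * x) ^ (y - a - 1) * interlace_weight \<beta> x a r mu * G (y # mu)"
  have x: "x ^ (M - y) = x * x ^ (M - 1 - y)" if "y \<le> M - 1" for y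
  proof -
    have "M - y = Suc (M - 1 - y)" using that assms by simp
    then show ?thesis by simp
  qed
  have "{a..M} = insert M {a..M - 1}" using assms by auto
  then have "(\<Sum>mu\<in>interlacing M (a # r). interlace_weight \<beta> x M (a # r) mu * G mu)
      = ?t M + (\<Sum>y\<in>{a..M - 1}. x ^ (M - y) * ?t y)"
    unfolding sum_interlacing_Cons using assms by (simp add: sum_distrib_left mult.assoc)
  also have "(\<Sum>y\<in>{a..M - 1}. x ^ (M - y) * ?t y) = x * (\<Sum>y\<in>{a..M - 1}. x ^ (M - 1 - y) * ?t y)"
    unfolding sum_distrib_left by (intro sum.cong refl) (simp add: x mult.assoc)
  also have "\<dots> = x * (\<Sum>mu\<in>interlacing (M - 1) (a # r). interlace_weight \<beta> x (M - 1) (a # r) mu * G mu)"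
    unfolding sum_interlacing_Cons by (simp add: sum_distrib_left mult.assoc)
  finally show ?thesis by (simp add: sum_distrib_left mult.assoc)
qed

lemma branch_B_Suc_top:
  assumes "M \<ge> 1" "\<forall>e\<in>set lam. e < M"
  shows "branch_B \<beta> (Suc M) x (replicate (Suc c) M @ lam) g =
     branch_B \<beta> M x lam (\<lambda>mu. g (replicate (Suc c) M @ mu)) + branch_D \<beta> M x lam (\<lambda>mu. g (replicate c M @ mu))"
proof -
  have L: "branch_B \<beta> (Suc M) x (replicate (Suc c) M @ lam) g
      = x ^ last (M # lam) * (\<Sum>mu\<in>interlacing M lam. interlace_weight \<beta> x M lam mu * g (replicate c M @ mu))"
    by (simp add: branch_B_def sum_interlacing_replicate interlace_weight_replicate
        last_Cons_replicate sum_distrib_left mult.assoc)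
  show ?thesis
  proof (cases lam)
    case Nil
    then show ?thesis using L assms by (cases M) (simp_all add: branch_B_def branch_D_def)
  next
    case (Cons a r)
    then have "a < M" using assms by simp
    from L[unfolded Cons sum_interlacing_top[OF this]] show ?thesis
      unfolding Cons by (simp add: branch_B_def branch_D_def replicate_append_Cons distrib_left sum_distrib_left mult_ac)
  qed
qed

lemma branch_D_Suc:
  assumes "M \<ge> 1" "\<forall>e\<in>set lam. e < M"
  shows "branch_D \<beta> (Suc M) x (replicate c M @ lam) g =
     x * branch_B \<beta> M x lam (\<lambda>mu. g (replicate (Suc c) M @ mu)) + x * branch_D \<beta> M x lam (\<lambda>mu. g (replicate c M @ mu))"
proof -
  have L: "branch_D \<beta> (Suc M) x (replicate c M @ lam) g
      = x * x ^ last (M # lam) * (\<Sum>mu\<in>interlacing M lam. interlace_weight \<beta> x M lam mu * g (replicate c M @ mu))"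
    by (simp add: branch_D_def sum_interlacing_replicate interlace_weight_replicate
        last_Cons_replicate sum_distrib_left mult.assoc)
  show ?thesis
  proof (cases lam)
    case Nil
    then show ?thesis using L assms by (cases M) (simp_all add: branch_B_def branch_D_def)
  next
    case (Cons a r)
    then have "a < M" using assms by simp
    from L[unfolded Cons sum_interlacing_top[OF this]] show ?thesis
      unfolding Cons by (simp add: branch_B_def branch_D_def replicate_append_Cons distrib_left sum_distrib_left mult_ac)
  qed
qed

lemma branch_B_one_site:
  "branch_B \<beta> 1 x (replicate c 0) (\<lambda>mu. g (occupation 1 mu)) = (if c = 0 then 0 else g [c - 1])"
  by (cases c) (simp_all add: branch_B_def interlacing_replicate_0 occupation_one_site
      interlace_weight_replicate[of _ _ 0 _ "[]" "[]", simplified]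
      last_Cons_replicate[of 0 _ "[]", simplified])

lemma branch_D_one_site:
  "branch_D \<beta> 1 x (replicate c 0) (\<lambda>mu. g (occupation 1 mu)) = x * g [c]"
  by (simp add: branch_D_def interlacing_replicate_0 occupation_one_site
      interlace_weight_replicate[of _ _ 0 c "[]" "[]", simplified]
      last_Cons_replicate[of 0 c "[]", simplified])

section \<open>The action of one row of the transfer matrix\<close>

lemma monodromy_row_branching_one_site:
  assumes "v \<noteq> 0"
  shows "v * monodromy \<beta> 1 v 0 1 \<psi> [c] = v * branch_B \<beta> 1 (v^2) (partition_of [c]) (\<lambda>mu. \<psi> (occupation 1 mu))
       \<and> v * monodromy \<beta> 1 v 1 1 \<psi> [c] = branch_D \<beta> 1 (v^2) (partition_of [c]) (\<lambda>mu. \<psi> (occupation 1 mu))"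
proof -
  have lam: "partition_of [c] = replicate c 0" by (simp add: partition_of_def)
  have m: "monodromy \<beta> 1 v a 1 \<psi> [c] = (\<Sum>y\<in>{..c+1}. site_coeff \<beta> v a 1 c y * \<psi> [y])" for a
    using monodromy_snoc[of "[]" 0 \<beta> v a 1 \<psi> c] by (simp add: sum_lessThan_2 del: monodromy.simps(2))
  show ?thesis
    unfolding m lam sum_site_coeff_01 sum_site_coeff_11 branch_B_one_site branch_D_one_site
    by (simp add: power2_eq_square)
qed

lemma monodromy_snoc_row:
  assumes "length n = M" "v \<noteq> 0"
    and B: "\<And>y. v ^ M * monodromy \<beta> M v 0 1 (\<lambda>m. \<psi> (m @ [y])) n = v * B y"
    and D: "\<And>y. v ^ M * monodromy \<beta> M v 1 1 (\<lambda>m. \<psi> (m @ [y])) n = D y"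
  shows "v ^ Suc M * monodromy \<beta> (Suc M) v 0 1 \<psi> (n @ [c])
           = v * (if c = 0 then (1 - \<beta> * v^2) * B 0 else B c + D (c - 1))"
    and "v ^ Suc M * monodromy \<beta> (Suc M) v 1 1 \<psi> (n @ [c]) = v^2 * (B (Suc c) + D c)"
proof -
  let ?X = "\<lambda>d y. monodromy \<beta> M v d 1 (\<lambda>m. \<psi> (m @ [y])) n"
  have expand: "monodromy \<beta> (Suc M) v a 1 \<psi> (n @ [c]) =
      (\<Sum>y\<in>{..c+1}. site_coeff \<beta> v a 0 c y * ?X 0 y) + (\<Sum>y\<in>{..c+1}. site_coeff \<beta> v a 1 c y * ?X 1 y)" for a
    using monodromy_snoc[OF assms(1)] by (simp add: sum_lessThan_2)
  show "v ^ Suc M * monodromy \<beta> (Suc M) v 0 1 \<psi> (n @ [c])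
      = v * (if c = 0 then (1 - \<beta> * v^2) * B 0 else B c + D (c - 1))"
  proof (cases c)
    case 0
    have "v ^ Suc M * monodromy \<beta> (Suc M) v 0 1 \<psi> (n @ [c]) = v ^ Suc M * ((inverse v - \<beta> * v) * ?X 0 0)"
      unfolding expand sum_site_coeff_00 sum_site_coeff_01 using 0 by simp
    also have "\<dots> = (1 - \<beta> * v^2) * (v ^ M * ?X 0 0)"
      using assms(2) by (simp add: field_simps power2_eq_square)
    also have "\<dots> = (1 - \<beta> * v^2) * (v * B 0)" by (simp only: B)
    finally show ?thesis using 0 by (simp add: mult.left_commute del: monodromy.simps(2))
  next
    case (Suc c')
    have "v ^ Suc M * monodromy \<beta> (Suc M) v 0 1 \<psi> (n @ [c]) = v ^ Suc M * (inverse v * ?X 0 c + ?X 1 c')"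
      unfolding expand sum_site_coeff_00 sum_site_coeff_01 using Suc by simp
    also have "\<dots> = v ^ M * ?X 0 c + v * (v ^ M * ?X 1 c')"
      using assms(2) by (simp add: field_simps)
    also have "\<dots> = v * B c + v * D c'" by (simp only: B D)
    finally show ?thesis using Suc by (simp add: distrib_left del: monodromy.simps(2))
  qed
  have "v ^ Suc M * monodromy \<beta> (Suc M) v 1 1 \<psi> (n @ [c]) = v ^ Suc M * (?X 0 (c + 1) + v * ?X 1 c)"
    unfolding expand sum_site_coeff_10 sum_site_coeff_11 by simp
  also have "\<dots> = v * (v ^ M * ?X 0 (c + 1)) + v * v * (v ^ M * ?X 1 c)"
    by (simp add: field_simps)
  finally show "v ^ Suc M * monodromy \<beta> (Suc M) v 1 1 \<psi> (n @ [c]) = v^2 * (B (Suc c) + D c)"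
    by (simp only: B D) (simp add: power2_eq_square algebra_simps del: monodromy.simps(2))
qed

lemma monodromy_row_branching_Suc:
  assumes "M \<ge> 1" "length n = M" "v \<noteq> 0"
    and IH: "\<And>\<psi>. v ^ M * monodromy \<beta> M v 0 1 \<psi> n
                = v * branch_B \<beta> M (v^2) (partition_of n) (\<lambda>mu. \<psi> (occupation M mu))
              \<and> v ^ M * monodromy \<beta> M v 1 1 \<psi> n
                = branch_D \<beta> M (v^2) (partition_of n) (\<lambda>mu. \<psi> (occupation M mu))"
  shows "v ^ Suc M * monodromy \<beta> (Suc M) v 0 1 \<psi> (n @ [c])
           = v * branch_B \<beta> (Suc M) (v^2) (partition_of (n @ [c])) (\<lambda>mu. \<psi> (occupation (Suc M) mu))
       \<and> v ^ Suc M * monodromy \<beta> (Suc M) v 1 1 \<psi> (n @ [c])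
           = branch_D \<beta> (Suc M) (v^2) (partition_of (n @ [c])) (\<lambda>mu. \<psi> (occupation (Suc M) mu))"
proof -
  let ?lam = "partition_of n" and ?g = "\<lambda>mu. \<psi> (occupation (Suc M) mu)"
  have lt: "\<forall>e\<in>set ?lam. e < M" using partition_of_lt assms(2) by blast
  define B where "B y = branch_B \<beta> M (v^2) ?lam (\<lambda>mu. ?g (replicate y M @ mu))" for y
  define D where "D y = branch_D \<beta> M (v^2) ?lam (\<lambda>mu. ?g (replicate y M @ mu))" for y
  have "branch_B \<beta> M (v^2) ?lam (\<lambda>mu. \<psi> (occupation M mu @ [y])) = B y" for y
    unfolding B_def using occupation_replicate interlacing_hd_tl_lt[OF lt] by (auto intro!: branch_B_cong)
  moreover have "branch_D \<beta> M (v^2) ?lam (\<lambda>mu. \<psi> (occupation M mu @ [y])) = D y" for y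
    unfolding D_def using occupation_replicate interlacing_lt[OF assms(1)] by (auto intro!: branch_D_cong)
  ultimately have row: "v ^ M * monodromy \<beta> M v 0 1 (\<lambda>m. \<psi> (m @ [y])) n = v * B y"
      "v ^ M * monodromy \<beta> M v 1 1 (\<lambda>m. \<psi> (m @ [y])) n = D y" for y
    using IH[of "\<lambda>m. \<psi> (m @ [y])"] by simp_all
  have "v * (if c = 0 then (1 - \<beta> * v^2) * B 0 else B c + D (c - 1))
      = v * branch_B \<beta> (Suc M) (v^2) (replicate c M @ ?lam) ?g"
    using branch_B_Suc_low[OF lt] branch_B_Suc_top[OF assms(1) lt, where c="c - 1"]
    by (cases c) (simp_all add: B_def D_def)
  moreover have "v^2 * (B (Suc c) + D c) = branch_D \<beta> (Suc M) (v^2) (replicate c M @ ?lam) ?g"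
    using branch_D_Suc[OF assms(1) lt] by (simp add: B_def D_def distrib_left)
  ultimately show ?thesis
    unfolding partition_of_snoc[OF assms(2)] monodromy_snoc_row[OF assms(2,3) row] by simp
qed

lemma monodromy_row_branching:
  assumes "M \<ge> 1" "length n = M" "v \<noteq> 0"
  shows "v ^ M * monodromy \<beta> M v 0 1 \<psi> n
           = v * branch_B \<beta> M (v^2) (partition_of n) (\<lambda>mu. \<psi> (occupation M mu))
       \<and> v ^ M * monodromy \<beta> M v 1 1 \<psi> n
           = branch_D \<beta> M (v^2) (partition_of n) (\<lambda>mu. \<psi> (occupation M mu))"
  using assms(1,2)
proof (induction M arbitrary: n \<psi> rule: nat_induct_at_least)
  case base
  then obtain c where "n = [c]" by (cases n) auto
  then show ?case using monodromy_row_branching_one_site[OF assms(3)] by simp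
next
  case (Suc M)
  obtain n' c where n: "n = n' @ [c]" using Suc.prems by (cases n rule: rev_cases) auto
  then have "length n' = M" using Suc.prems by simp
  then show ?case unfolding n using monodromy_row_branching_Suc[OF Suc.hyps _ assms(3) Suc.IH] by blast
qed

section \<open>The amplitudes as iterated branching sums\<close>

(* the tableau expansion: one branching step per spectral parameter *)
fun branch_sum :: "complex \<Rightarrow> nat \<Rightarrow> nat \<Rightarrow> (nat \<Rightarrow> complex) \<Rightarrow> nat list \<Rightarrow> complex" where
  "branch_sum \<beta> M 0 u lam = (if lam = [] then 1 else 0)"
| "branch_sum \<beta> M (Suc N) u lam = branch_B \<beta> M (u 0) lam (\<lambda>mu. branch_sum \<beta> M N (u \<circ> Suc) mu)"

lemma branch_sum_cong: "(\<And>i. i < N \<Longrightarrow> u i = u' i) \<Longrightarrow> branch_sum \<beta> M N u lam = branch_sum \<beta> M N u' lam"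
proof (induction N arbitrary: u u' lam)
  case 0 then show ?case by simp
next
  case (Suc N)
  have "branch_sum \<beta> M N (u \<circ> Suc) = branch_sum \<beta> M N (u' \<circ> Suc)"
    using Suc.IH[of "u \<circ> Suc" "u' \<circ> Suc"] Suc.prems by (simp add: o_def fun_eq_iff)
  moreover have "u 0 = u' 0" using Suc.prems by simp
  ultimately show ?case by (simp only: branch_sum.simps)
qed

lemma amp_ket_branch_sum:
  assumes "M \<ge> 1" "\<forall>j<N. v j \<noteq> 0" "length n = M"
  shows "amp_ket \<beta> M N v n * (\<Prod>j<N. v j ^ M) = (\<Prod>j<N. v j) * branch_sum \<beta> M N (\<lambda>j. (v j)^2) (partition_of n)"
  using assms(2,3)
proof (induction N arbitrary: v n)
  case 0
  then show ?case by (simp add: amp_ket_def Psi_ket_def vacuum_def ket_def partition_of_eq_Nil)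
next
  case (Suc N)
  let ?P = "\<Prod>j<N. v (Suc j) ^ M" and ?Q = "\<Prod>j<N. v (Suc j)"
  let ?\<psi> = "amp_ket \<beta> M N (v \<circ> Suc)" and ?lam = "partition_of n"
  have v0: "v 0 \<noteq> 0" using Suc.prems by auto
  have lt: "\<forall>e\<in>set ?lam. e < M" using partition_of_lt Suc.prems by blast
  have IH: "?P * ?\<psi> m = ?Q * branch_sum \<beta> M N (\<lambda>j. (v (Suc j))^2) (partition_of m)" if "length m = M" for m
    using Suc.IH[of "v \<circ> Suc" m] Suc.prems that by (simp add: comp_def mult.commute)
  have row: "v 0 ^ M * Bop \<beta> M (v 0) ?\<psi> n = v 0 * branch_B \<beta> M ((v 0)^2) ?lam (\<lambda>mu. ?\<psi> (occupation M mu))"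
    using monodromy_row_branching[OF assms(1) Suc.prems(2) v0, of \<beta> ?\<psi>] by (simp add: Bop_def)
  have "amp_ket \<beta> M (Suc N) v n * (\<Prod>j<Suc N. v j ^ M) = (v 0 ^ M * Bop \<beta> M (v 0) ?\<psi> n) * ?P"
    by (simp del: prod.lessThan_Suc add: amp_ket_Suc prod.lessThan_Suc_shift mult_ac)
  also have "\<dots> = v 0 * branch_B \<beta> M ((v 0)^2) ?lam (\<lambda>mu. ?P * ?\<psi> (occupation M mu))"
    by (simp only: row) (simp add: branch_B_scale mult_ac)
  also have "\<dots> = v 0 * branch_B \<beta> M ((v 0)^2) ?lam (\<lambda>mu. ?Q * branch_sum \<beta> M N (\<lambda>j. (v (Suc j))^2) mu)"
    using branch_B_occupation_cong[where f="\<lambda>m. ?P * ?\<psi> m"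
        and g="\<lambda>mu. ?Q * branch_sum \<beta> M N (\<lambda>j. (v (Suc j))^2) mu", OF lt IH] by simp
  also have "\<dots> = (\<Prod>j<Suc N. v j) * branch_sum \<beta> M (Suc N) (\<lambda>j. (v j)^2) ?lam"
    by (simp del: prod.lessThan_Suc add: branch_B_scale prod.lessThan_Suc_shift o_def)
  finally show ?case .
qed

lemma amp_bra_branch_sum:
  assumes "M \<ge> 1" "\<forall>j<N. v j \<noteq> 0" "length n = M"
  shows "amp_bra \<beta> M N v n * (\<Prod>j<N. v j ^ M) = (\<Prod>j<N. v j) * branch_sum \<beta> M N (\<lambda>j. (v (N - 1 - j))^2) (partition_of (rev n))"
  using assms(2,3)
proof (induction N arbitrary: n)
  case 0
  have "rev n = replicate M 0 \<longleftrightarrow> n = replicate M 0" by (metis rev_replicate rev_rev_ident)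
  then show ?case using 0 by (simp add: amp_bra_def ket_def partition_of_eq_Nil)
next
  case (Suc N)
  let ?P = "\<Prod>j<N. v j ^ M" and ?Q = "\<Prod>j<N. v j" and ?u = "\<lambda>j. (v (N - 1 - j))^2"
  let ?\<psi> = "\<lambda>m. amp_bra \<beta> M N v (rev m)" and ?lam = "partition_of (rev n)"
  have vN: "v N \<noteq> 0" using Suc.prems by auto
  have lr: "length (rev n) = M" using Suc.prems by simp
  have lt: "\<forall>e\<in>set ?lam. e < M" using partition_of_lt lr by blast
  have IH: "?P * ?\<psi> m = ?Q * branch_sum \<beta> M N ?u (partition_of m)" if "length m = M" for m
    using Suc.IH[of "rev m"] Suc.prems that by (simp add: mult.commute)
  have row: "v N ^ M * Bop \<beta> M (v N) ?\<psi> (rev n) = v N * branch_B \<beta> M ((v N)^2) ?lam (\<lambda>mu. ?\<psi> (occupation M mu))"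
    using monodromy_row_branching[OF assms(1) lr vN, of \<beta> ?\<psi>] by (simp add: Bop_def)
  have "amp_bra \<beta> M (Suc N) v n * (\<Prod>j<Suc N. v j ^ M) = (v N ^ M * Bop \<beta> M (v N) ?\<psi> (rev n)) * ?P"
    by (simp add: amp_bra_Suc[OF Suc.prems(2)] mult_ac)
  also have "\<dots> = v N * branch_B \<beta> M ((v N)^2) ?lam (\<lambda>mu. ?P * ?\<psi> (occupation M mu))"
    by (simp only: row) (simp add: branch_B_scale mult_ac)
  also have "\<dots> = v N * branch_B \<beta> M ((v N)^2) ?lam (\<lambda>mu. ?Q * branch_sum \<beta> M N ?u mu)"
    using branch_B_occupation_cong[where f="\<lambda>m. ?P * ?\<psi> m"
        and g="\<lambda>mu. ?Q * branch_sum \<beta> M N ?u mu", OF lt IH] by simp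
  also have "\<dots> = (\<Prod>j<Suc N. v j) * branch_sum \<beta> M (Suc N) (\<lambda>j. (v (Suc N - 1 - j))^2) ?lam"
  proof -
    have "(\<lambda>j. (v (Suc N - 1 - j))^2) \<circ> Suc = ?u" by (rule ext) (simp add: diff_diff_left)
    then show ?thesis by (simp add: branch_B_scale algebra_simps)
  qed
  finally show ?case .
qed

section \<open>Determinant identities\<close>

definition choice_lists :: "nat \<Rightarrow> (nat \<Rightarrow> nat set) \<Rightarrow> nat list set" where
  "choice_lists n T = {mu. length mu = n \<and> (\<forall>k<n. mu!k \<in> T k)}"

lemma choice_lists_Suc: "choice_lists (Suc n) T = (\<lambda>(mu, t). mu @ [t]) ` (choice_lists n T \<times> T n)"
proof (intro equalityI subsetI)
  fix mu assume mu: "mu \<in> choice_lists (Suc n) T"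
  then obtain mu0 t where e: "mu = mu0 @ [t]" by (cases mu rule: rev_cases) (auto simp: choice_lists_def)
  have "mu0 \<in> choice_lists n T"
  proof -
    have "\<forall>k<n. mu0 ! k \<in> T k"
    proof (intro allI impI)
      fix k assume k: "k < n"
      then have "mu ! k \<in> T k" using mu by (auto simp: choice_lists_def)
      then show "mu0 ! k \<in> T k" using k mu e by (auto simp: choice_lists_def nth_append)
    qed
    then show ?thesis using mu e by (auto simp: choice_lists_def)
  qed
  moreover have "t \<in> T n" using mu e by (auto simp: choice_lists_def dest!: spec[of _ n])
  ultimately show "mu \<in> (\<lambda>(mu, t). mu @ [t]) ` (choice_lists n T \<times> T n)" using e by auto
next
  fix mu assume "mu \<in> (\<lambda>(mu, t). mu @ [t]) ` (choice_lists n T \<times> T n)"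
  then show "mu \<in> choice_lists (Suc n) T" by (auto simp: choice_lists_def nth_append less_Suc_eq)
qed

lemma choice_lists_Cons: "choice_lists (Suc n) T = (\<lambda>(y, mu). y # mu) ` (T 0 \<times> choice_lists n (\<lambda>k. T (Suc k)))"
proof (intro equalityI subsetI)
  fix mu assume mu: "mu \<in> choice_lists (Suc n) T"
  then obtain y mu' where e: "mu = y # mu'" by (cases mu) (auto simp: choice_lists_def)
  have "y \<in> T 0" using mu e by (auto simp: choice_lists_def)
  moreover have "mu' \<in> choice_lists n (\<lambda>k. T (Suc k))" using mu e by (auto simp: choice_lists_def)
  ultimately show "mu \<in> (\<lambda>(y, mu). y # mu) ` (T 0 \<times> choice_lists n (\<lambda>k. T (Suc k)))" using e by auto
next
  fix mu assume "mu \<in> (\<lambda>(y, mu). y # mu) ` (T 0 \<times> choice_lists n (\<lambda>k. T (Suc k)))"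
  then show "mu \<in> choice_lists (Suc n) T" by (auto simp: choice_lists_def nth_Cons split: nat.splits)
qed

lemma prod_sum_choice_lists:
  fixes F :: "nat \<Rightarrow> nat \<Rightarrow> 'a::comm_semiring_1"
  assumes "\<And>k. k < n \<Longrightarrow> finite (T k)"
  shows "(\<Prod>k<n. \<Sum>t\<in>T k. F k t) = (\<Sum>mu\<in>choice_lists n T. \<Prod>k<n. F k (mu!k))"
  using assms
proof (induction n)
  case 0
  have "choice_lists 0 T = {[]}" by (auto simp: choice_lists_def)
  then show ?case by simp
next
  case (Suc n)
  have inj: "inj_on (\<lambda>(mu, t). mu @ [t]) (choice_lists n T \<times> T n)" by (auto simp: inj_on_def)
  have "(\<Sum>mu\<in>choice_lists (Suc n) T. \<Prod>k<Suc n. F k (mu!k)) =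
      sum ((\<lambda>mu. \<Prod>k<Suc n. F k (mu!k)) \<circ> (\<lambda>(mu, t). mu @ [t])) (choice_lists n T \<times> T n)"
    unfolding choice_lists_Suc by (rule sum.reindex[OF inj])
  also have "\<dots> = (\<Sum>(mu, t)\<in>choice_lists n T \<times> T n. (\<Prod>k<n. F k (mu!k)) * F n t)"
  proof (rule sum.cong)
    fix p assume p: "p \<in> choice_lists n T \<times> T n"
    obtain mu t where pe: "p = (mu, t)" by (cases p)
    have l: "length mu = n" using p pe by (auto simp: choice_lists_def)
    have "(\<Prod>k<n. F k ((mu @ [t]) ! k)) = (\<Prod>k<n. F k (mu!k))"
      using l by (intro prod.cong) (auto simp: nth_append)
    then show "((\<lambda>mu. \<Prod>k<Suc n. F k (mu!k)) \<circ> (\<lambda>(mu, t). mu @ [t])) p = (case p of (mu, t) \<Rightarrow> (\<Prod>k<n. F k (mu!k)) * F n t)"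
      using l pe by (simp add: nth_append)
  qed simp
  also have "\<dots> = (\<Sum>mu\<in>choice_lists n T. \<Sum>t\<in>T n. (\<Prod>k<n. F k (mu!k)) * F n t)"
    by (rule sum.cartesian_product[symmetric])
  also have "\<dots> = (\<Sum>mu\<in>choice_lists n T. \<Prod>k<n. F k (mu!k)) * (\<Sum>t\<in>T n. F n t)"
    by (rule sum_product[symmetric])
  also have "\<dots> = (\<Prod>k<Suc n. \<Sum>t\<in>T k. F k t)"
    using Suc by simp
  finally show ?case by simp
qed

lemma det_mat_columns:
  "det (mat n n f) = (\<Sum>p\<in>{p. p permutes {0..<n}}. signof p * (\<Prod>k<n. f (p k, k)))"
proof -
  have c: "transpose_mat (mat n n f) \<in> carrier_mat n n" by simp
  have "det (mat n n f) = det (transpose_mat (mat n n f))"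
    using det_transpose[of "mat n n f" n] by simp
  also have "\<dots> = (\<Sum>p\<in>{p. p permutes {0..<n}}. signof p * (\<Prod>k=0..<n. transpose_mat (mat n n f) $$ (k, p k)))"
    by (rule det_def'[OF c])
  also have "\<dots> = (\<Sum>p\<in>{p. p permutes {0..<n}}. signof p * (\<Prod>k<n. f (p k, k)))"
  proof (intro sum.cong refl)
    fix p assume "p \<in> {p. p permutes {0..<n}}"
    then have "\<And>k. k < n \<Longrightarrow> p k < n" by (auto dest: permutes_in_image)
    then show "signof p * (\<Prod>k=0..<n. transpose_mat (mat n n f) $$ (k, p k)) = signof p * (\<Prod>k<n. f (p k, k))"
      by (auto simp: atLeast0LessThan intro!: prod.cong)
  qed
  finally show ?thesis .
qed

lemma det_mat_column_sums:
  fixes w :: "nat \<Rightarrow> nat \<Rightarrow> 'a::comm_ring_1" and g :: "nat \<Rightarrow> nat \<Rightarrow> nat \<Rightarrow> 'a"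
  assumes "\<And>k. k < n \<Longrightarrow> finite (T k)"
  shows "det (mat n n (\<lambda>(i, k). \<Sum>t\<in>T k. w k t * g k t i)) =
     (\<Sum>mu\<in>choice_lists n T. (\<Prod>k<n. w k (mu!k)) * det (mat n n (\<lambda>(i, k). g k (mu!k) i)))"
proof -
  have "det (mat n n (\<lambda>(i, k). \<Sum>t\<in>T k. w k t * g k t i)) =
      (\<Sum>p\<in>{p. p permutes {0..<n}}. signof p * (\<Prod>k<n. \<Sum>t\<in>T k. w k t * g k t (p k)))"
    by (simp add: det_mat_columns)
  also have "\<dots> = (\<Sum>p\<in>{p. p permutes {0..<n}}. signof p * (\<Sum>mu\<in>choice_lists n T. \<Prod>k<n. w k (mu!k) * g k (mu!k) (p k)))"
  proof (intro sum.cong refl)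
    fix p
    show "signof p * (\<Prod>k<n. \<Sum>t\<in>T k. w k t * g k t (p k)) = signof p * (\<Sum>mu\<in>choice_lists n T. \<Prod>k<n. w k (mu!k) * g k (mu!k) (p k))"
      using prod_sum_choice_lists[of n T "\<lambda>k t. w k t * g k t (p k)"] assms by simp
  qed
  also have "\<dots> = (\<Sum>p\<in>{p. p permutes {0..<n}}. \<Sum>mu\<in>choice_lists n T. (\<Prod>k<n. w k (mu!k)) * (signof p * (\<Prod>k<n. g k (mu!k) (p k))))"
    by (simp add: sum_distrib_left prod.distrib mult_ac)
  also have "\<dots> = (\<Sum>mu\<in>choice_lists n T. \<Sum>p\<in>{p. p permutes {0..<n}}. (\<Prod>k<n. w k (mu!k)) * (signof p * (\<Prod>k<n. g k (mu!k) (p k))))"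
    by (rule sum.swap)
  also have "\<dots> = (\<Sum>mu\<in>choice_lists n T. (\<Prod>k<n. w k (mu!k)) * det (mat n n (\<lambda>(i, k). g k (mu!k) i)))"
    by (simp add: det_mat_columns sum_distrib_left)
  finally show ?thesis .
qed

lemma det_mat_scale:
  fixes r s :: "nat \<Rightarrow> 'a::comm_ring_1" and A :: "nat \<Rightarrow> nat \<Rightarrow> 'a"
  shows "det (mat n n (\<lambda>(i, k). r i * s k * A i k)) = (\<Prod>i<n. r i) * (\<Prod>k<n. s k) * det (mat n n (\<lambda>(i, k). A i k))"
proof -
  have "det (mat n n (\<lambda>(i, k). r i * s k * A i k)) =
     (\<Sum>p\<in>{p. p permutes {0..<n}}. signof p * (\<Prod>k<n. r (p k) * s k * A (p k) k))"
    by (simp add: det_mat_columns)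
  also have "\<dots> = (\<Sum>p\<in>{p. p permutes {0..<n}}. (\<Prod>i<n. r i) * (\<Prod>k<n. s k) * (signof p * (\<Prod>k<n. A (p k) k)))"
  proof (intro sum.cong refl)
    fix p assume "p \<in> {p. p permutes {0..<n}}"
    then have pp: "p permutes {..<n}" by (simp add: atLeast0LessThan)
    have "(\<Prod>k<n. r (p k)) = (\<Prod>i<n. r i)" using prod.permute[OF pp, of r] by (simp add: o_def)
    then show "signof p * (\<Prod>k<n. r (p k) * s k * A (p k) k) = (\<Prod>i<n. r i) * (\<Prod>k<n. s k) * (signof p * (\<Prod>k<n. A (p k) k))"
      by (simp add: prod.distrib mult_ac)
  qed
  also have "\<dots> = (\<Prod>i<n. r i) * (\<Prod>k<n. s k) * det (mat n n (\<lambda>(i, k). A i k))"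
    by (simp add: det_mat_columns sum_distrib_left)
  finally show ?thesis .
qed

(* Subtract F 0 k / F 0 (k+1) times column k+1 from column k for k = 0, ..., n-1, left to
   right, and expand along the first row, where only the last entry survives. *)
lemma det_eliminate_first_row:
  fixes F :: "nat \<Rightarrow> nat \<Rightarrow> 'a::field"
  assumes nz: "\<And>k. k < n \<Longrightarrow> F 0 (Suc k) \<noteq> 0"
  shows "det (mat (Suc n) (Suc n) (\<lambda>(i, k). F i k)) = F 0 n * (-1) ^ n *
    det (mat n n (\<lambda>(i, k). F (Suc i) k - F 0 k / F 0 (Suc k) * F (Suc i) (Suc k)))"
proof -
  define \<rho> where "\<rho> k = F 0 k / F 0 (Suc k)" for k
  define C where "C j = mat (Suc n) (Suc n) (\<lambda>(i, k). if k < j then F i k - \<rho> k * F i (Suc k) else F i k)" for j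
  have "det (C j) = det (C 0)" if "j \<le> n" for j
    using that
  proof (induction j)
    case (Suc j)
    have "C (Suc j) = addcol (- \<rho> j) j (Suc j) (C j)"
      by (rule eq_matI) (use Suc.prems in \<open>auto simp: C_def\<close>)
    then have "det (C (Suc j)) = det (C j)"
      using Suc.prems by (simp add: C_def det_addcol[where n="Suc n"])
    then show ?case using Suc by simp
  qed simp
  then have "det (mat (Suc n) (Suc n) (\<lambda>(i, k). F i k)) = det (C n)"
    by (simp add: C_def)
  also have "\<dots> = (\<Sum>k<Suc n. C n $$ (0, k) * cofactor (C n) 0 k)"
    by (rule laplace_expansion_row) (simp_all add: C_def)
  also have "\<dots> = C n $$ (0, n) * cofactor (C n) 0 n"
    using nz by (simp add: C_def \<rho>_def)
  also have "\<dots> = F 0 n * (-1) ^ n * det (mat n n (\<lambda>(i, k). F (Suc i) k - \<rho> k * F (Suc i) (Suc k)))"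
  proof -
    have "mat_delete (C n) 0 n = mat n n (\<lambda>(i, k). F (Suc i) k - \<rho> k * F (Suc i) (Suc k))"
      by (rule eq_matI) (auto simp: mat_delete_def C_def)
    then show ?thesis by (simp add: cofactor_def C_def)
  qed
  finally show ?thesis by (simp add: \<rho>_def)
qed

lemma vandermonde_Suc:
  "vandermonde (Suc n) u = (\<Prod>j<n. u 0 - u (Suc j)) * vandermonde n (u \<circ> Suc)"
proof -
  let ?P = "\<lambda>n. {(j, k). j < k \<and> k < (n::nat)}"
  have eq: "?P (Suc n) = (\<lambda>k. (0, Suc k)) ` {..<n} \<union> (\<lambda>(j, k). (Suc j, Suc k)) ` ?P n"
  proof (intro equalityI subsetI)
    fix p assume "p \<in> ?P (Suc n)"
    then obtain j k where p: "p = (j, k)" "j < k" "k < Suc n" by auto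
    then obtain k' where k': "k = Suc k'" by (cases k) auto
    show "p \<in> (\<lambda>k. (0, Suc k)) ` {..<n} \<union> (\<lambda>(j, k). (Suc j, Suc k)) ` ?P n"
    proof (cases j)
      case 0 then show ?thesis using p k' by auto
    next
      case (Suc j')
      then have "(j', k') \<in> ?P n" using p k' by auto
      then show ?thesis using p k' Suc by force
    qed
  qed auto
  have fin: "finite (?P n)" by (rule finite_subset[of _ "{..<n} \<times> {..<n}"]) auto
  have "vandermonde (Suc n) u = (\<Prod>p\<in>(\<lambda>k. (0, Suc k)) ` {..<n}. case p of (j, k) \<Rightarrow> u j - u k) *
      (\<Prod>p\<in>(\<lambda>(j, k). (Suc j, Suc k)) ` ?P n. case p of (j, k) \<Rightarrow> u j - u k)"
    unfolding vandermonde_def eq by (rule prod.union_disjoint) (use fin in auto)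
  also have "\<dots> = (\<Prod>j<n. u 0 - u (Suc j)) * vandermonde n (u \<circ> Suc)"
  proof -
    have i1: "inj_on (\<lambda>k. (0::nat, Suc k)) {..<n}" by (auto simp: inj_on_def)
    have i2: "inj_on (\<lambda>(j, k). (Suc j, Suc k)) (?P n)" by (auto simp: inj_on_def)
    have a: "(\<Prod>p\<in>(\<lambda>k. (0, Suc k)) ` {..<n}. case p of (j, k) \<Rightarrow> u j - u k) = (\<Prod>j<n. u 0 - u (Suc j))"
      by (subst prod.reindex[OF i1]) simp
    have b: "(\<Prod>p\<in>(\<lambda>(j, k). (Suc j, Suc k)) ` ?P n. case p of (j, k) \<Rightarrow> u j - u k) = vandermonde n (u \<circ> Suc)"
      unfolding vandermonde_def by (subst prod.reindex[OF i2]) (auto intro!: prod.cong)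
    show ?thesis using a b by simp
  qed
  finally show ?thesis .
qed

definition reverse_perm :: "nat \<Rightarrow> nat \<Rightarrow> nat" where
  "reverse_perm N i = (if i < N then N - 1 - i else i)"

lemma reverse_perm_permutes: "reverse_perm N permutes {0..<N}"
proof (rule bij_imp_permutes)
  show "bij_betw (reverse_perm N) {0..<N} {0..<N}"
    by (rule bij_betwI[where g="reverse_perm N"]) (auto simp: reverse_perm_def)
  show "\<And>x. x \<notin> {0..<N} \<Longrightarrow> reverse_perm N x = x" by (auto simp: reverse_perm_def)
qed

lemma signof_nonzero: "(signof p :: 'a::comm_ring_1) \<noteq> 0"
  by (simp add: sign_def)

lemma det_rev_rows:
  fixes f :: "'b \<Rightarrow> nat \<Rightarrow> 'a::comm_ring_1"
  shows "det (mat N N (\<lambda>(i, k). f (u (N - 1 - i)) k)) = signof (reverse_perm N) * det (mat N N (\<lambda>(i, k). f (u i) k))"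
proof -
  have "mat N N (\<lambda>(i, k). f (u (N - 1 - i)) k) = mat N N (\<lambda>(i, k). mat N N (\<lambda>(i, k). f (u i) k) $$ (reverse_perm N i, k))"
    by (rule eq_matI) (auto simp: reverse_perm_def)
  then show ?thesis using det_permute_rows[OF _ reverse_perm_permutes, of "mat N N (\<lambda>(i, k). f (u i) k)"] by simp
qed

section \<open>The determinant obeys the branching rule\<close>

(* the Grothendieck determinant in the variables u = z / (1 + beta z), see groth_matrix_uvar *)
definition groth_entry :: "complex \<Rightarrow> nat \<Rightarrow> nat \<Rightarrow> nat list \<Rightarrow> nat \<Rightarrow> complex \<Rightarrow> complex" where
  "groth_entry \<beta> M N lam k y = y ^ (lam!k + (N - 1 - k)) * (1 - \<beta> * y) ^ (M - 1 - lam!k)"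

definition groth_det :: "complex \<Rightarrow> nat \<Rightarrow> nat \<Rightarrow> nat list \<Rightarrow> (nat \<Rightarrow> complex) \<Rightarrow> complex" where
  "groth_det \<beta> M N lam u = det (mat N N (\<lambda>(i, k). groth_entry \<beta> M N lam k (u i)))"

(* j - 1 truncates, so the terms j = 0 and j = 1 both carry (1 - beta x)^0 *)
definition diff_quot :: "complex \<Rightarrow> complex \<Rightarrow> complex \<Rightarrow> nat \<Rightarrow> complex" where
  "diff_quot \<beta> x y s = (\<Sum>j\<le>s. x ^ (s - j) * (1 - \<beta> * x) ^ (j - 1) * y ^ j * (1 - \<beta> * y) ^ (s - j))"

lemma diff_quot_Suc: "diff_quot \<beta> x y (Suc s) = x * (1 - \<beta> * y) * diff_quot \<beta> x y s + y ^ Suc s * (1 - \<beta> * x) ^ s"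
proof -
  have "diff_quot \<beta> x y (Suc s) = (\<Sum>j\<le>s. x ^ (Suc s - j) * (1 - \<beta> * x) ^ (j - 1) * y ^ j * (1 - \<beta> * y) ^ (Suc s - j))
      + y ^ Suc s * (1 - \<beta> * x) ^ s"
    by (simp add: diff_quot_def)
  also have "(\<Sum>j\<le>s. x ^ (Suc s - j) * (1 - \<beta> * x) ^ (j - 1) * y ^ j * (1 - \<beta> * y) ^ (Suc s - j))
      = x * (1 - \<beta> * y) * diff_quot \<beta> x y s"
    unfolding diff_quot_def sum_distrib_left
    by (intro sum.cong refl) (simp add: Suc_diff_le algebra_simps)
  finally show ?thesis .
qed

lemma diff_quot_eq: "y ^ Suc s * (1 - \<beta> * x) ^ s - x ^ Suc s * (1 - \<beta> * y) ^ s = (y - x) * diff_quot \<beta> x y s"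
proof (induction s)
  case 0 then show ?case by (simp add: diff_quot_def)
next
  case (Suc s)
  have "(y - x) * diff_quot \<beta> x y (Suc s) = x * (1 - \<beta> * y) * ((y - x) * diff_quot \<beta> x y s) + (y - x) * y ^ Suc s * (1 - \<beta> * x) ^ s"
    by (simp add: diff_quot_Suc algebra_simps)
  also have "\<dots> = x * (1 - \<beta> * y) * (y ^ Suc s * (1 - \<beta> * x) ^ s - x ^ Suc s * (1 - \<beta> * y) ^ s)
      + (y - x) * y ^ Suc s * (1 - \<beta> * x) ^ s"
    by (simp only: Suc.IH)
  also have "\<dots> = y ^ Suc (Suc s) * (1 - \<beta> * x) ^ Suc s - x ^ Suc (Suc s) * (1 - \<beta> * y) ^ Suc s"
    by (simp add: algebra_simps)
  finally show ?case by simp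
qed

lemma interval_sum_diff_quot:
  fixes x y :: complex
  assumes "q \<le> p" "p < M"
  shows "(\<Sum>t\<in>{q..p}. x ^ (p - t) * (1 - \<beta> * x) ^ (t - q - 1) * (y ^ (t + e) * (1 - \<beta> * y) ^ (M - 1 - t)))
    = y ^ (q + e) * (1 - \<beta> * y) ^ (M - 1 - p) * diff_quot \<beta> x y (p - q)"
proof -
  let ?s = "p - q" and ?Y = "y ^ (q + e) * (1 - \<beta> * y) ^ (M - 1 - p)"
  have "(\<Sum>t\<in>{q..p}. x ^ (p - t) * (1 - \<beta> * x) ^ (t - q - 1) * (y ^ (t + e) * (1 - \<beta> * y) ^ (M - 1 - t)))
      = (\<Sum>j\<le>?s. x ^ (p - (q + j)) * (1 - \<beta> * x) ^ (q + j - q - 1) * (y ^ (q + j + e) * (1 - \<beta> * y) ^ (M - 1 - (q + j))))"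
    by (simp add: sum.atLeastAtMost_shift_0[OF assms(1)] atLeast0AtMost)
  also have "\<dots> = (\<Sum>j\<le>?s. ?Y * (x ^ (?s - j) * (1 - \<beta> * x) ^ (j - 1) * y ^ j * (1 - \<beta> * y) ^ (?s - j)))"
  proof (intro sum.cong refl)
    fix j assume j: "j \<in> {..?s}"
    have "M - 1 - (q + j) = (M - 1 - p) + (?s - j)" "p - (q + j) = ?s - j" using j assms by auto
    moreover have "y ^ (q + j + e) = y ^ (q + e) * y ^ j" by (simp add: power_add[symmetric] add_ac)
    ultimately show "x ^ (p - (q + j)) * (1 - \<beta> * x) ^ (q + j - q - 1) * (y ^ (q + j + e) * (1 - \<beta> * y) ^ (M - 1 - (q + j)))
        = ?Y * (x ^ (?s - j) * (1 - \<beta> * x) ^ (j - 1) * y ^ j * (1 - \<beta> * y) ^ (?s - j))"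
      by (simp add: power_add algebra_simps)
  qed
  also have "\<dots> = ?Y * diff_quot \<beta> x y ?s" by (simp add: diff_quot_def sum_distrib_left)
  finally show ?thesis .
qed

lemma reduced_column_entry:
  fixes x y :: complex
  assumes "q \<le> p" "p < M" "x \<noteq> 0" "1 - \<beta> * x \<noteq> 0"
  shows "y ^ (p + Suc e) * (1 - \<beta> * y) ^ (M - 1 - p)
     - (x ^ (p + Suc e) * (1 - \<beta> * x) ^ (M - 1 - p) / (x ^ (q + e) * (1 - \<beta> * x) ^ (M - 1 - q)))
       * (y ^ (q + e) * (1 - \<beta> * y) ^ (M - 1 - q))
   = (y - x) * (\<Sum>t\<in>{q..p}. x ^ (p - t) * (1 - \<beta> * x) ^ (t - q - 1) * (y ^ (t + e) * (1 - \<beta> * y) ^ (M - 1 - t)))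
     / (1 - \<beta> * x) ^ (p - q)"
proof -
  define s where "s = p - q"
  have p: "p = q + s" and e1: "M - 1 - q = (M - 1 - p) + s" using assms s_def by auto
  have xy: "x ^ (p + Suc e) = x ^ (q + e) * x ^ Suc s" "y ^ (p + Suc e) = y ^ (q + e) * y ^ Suc s"
    unfolding p power_add[symmetric] by (simp_all add: add_ac)
  have b: "(1 - \<beta> * x) ^ (M - 1 - q) = (1 - \<beta> * x) ^ (M - 1 - p) * (1 - \<beta> * x) ^ s"
    "(1 - \<beta> * y) ^ (M - 1 - q) = (1 - \<beta> * y) ^ (M - 1 - p) * (1 - \<beta> * y) ^ s"
    unfolding e1 by (simp_all add: power_add)
  have "y ^ (p + Suc e) * (1 - \<beta> * y) ^ (M - 1 - p)
     - (x ^ (p + Suc e) * (1 - \<beta> * x) ^ (M - 1 - p) / (x ^ (q + e) * (1 - \<beta> * x) ^ (M - 1 - q)))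
       * (y ^ (q + e) * (1 - \<beta> * y) ^ (M - 1 - q))
     = y ^ (q + e) * (1 - \<beta> * y) ^ (M - 1 - p)
       * (y ^ Suc s * (1 - \<beta> * x) ^ s - x ^ Suc s * (1 - \<beta> * y) ^ s) / (1 - \<beta> * x) ^ s"
    unfolding xy b using assms by (simp add: field_simps)
  then show ?thesis
    unfolding interval_sum_diff_quot[OF assms(1,2)] diff_quot_eq s_def by (simp add: algebra_simps)
qed

lemma choice_lists_interlacing: "length r = n \<Longrightarrow> choice_lists n (\<lambda>k. {r!k .. (h#r)!k}) = interlacing h r"
proof (induction r arbitrary: h n)
  case Nil
  then show ?case by (auto simp: choice_lists_def)
next
  case (Cons b r)
  then obtain n' where n: "n = Suc n'" "length r = n'" by auto
  have "choice_lists n (\<lambda>k. {(b#r)!k .. (h#b#r)!k}) = (\<lambda>(y, mu). y # mu) ` ({b..h} \<times> choice_lists n' (\<lambda>k. {r!k .. (b#r)!k}))"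
    unfolding n choice_lists_Cons by simp
  also have "\<dots> = interlacing h (b # r)" using Cons.IH[OF n(2)] by simp
  finally show ?case .
qed

lemma interlace_weight_prod: "length mu = length r \<Longrightarrow>
  interlace_weight \<beta> x h r mu = (\<Prod>k<length r. x ^ ((h#r)!k - mu!k) * (1 - \<beta> * x) ^ (mu!k - r!k - 1))"
proof (induction r arbitrary: h mu)
  case Nil then show ?case by (cases mu) auto
next
  case (Cons b r)
  then obtain y mu' where mu: "mu = y # mu'" "length mu' = length r" by (cases mu) auto
  show ?case using Cons.IH[OF mu(2), of b] by (simp add: mu prod.lessThan_Suc_shift del: prod.lessThan_Suc)
qed

lemma sum_sorted_steps:
  fixes lam :: "nat list"
  assumes "sorted_wrt (\<ge>) lam" "length lam = Suc n" "m \<le> n"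
  shows "(\<Sum>k<m. lam!k - lam!(Suc k)) = lam!0 - lam!m"
  using assms(3)
proof (induction m)
  case 0 then show ?case by simp
next
  case (Suc m)
  have a: "lam!m \<ge> lam!(Suc m)" using assms Suc.prems by (intro sorted_wrt_nth_less[OF assms(1)]) auto
  have b: "lam!0 \<ge> lam!m" using assms Suc.prems
    by (cases m) (auto intro: sorted_wrt_nth_less[OF assms(1)])
  show ?case using Suc a b by simp
qed

lemma prod_diff_flip: "(\<Prod>i<n. (f i :: complex) - x) * (-1) ^ n = (\<Prod>i<n. x - f i)"
  by (induction n) (auto simp: algebra_simps)

lemma groth_det_reduced_minor:
  fixes u :: "nat \<Rightarrow> complex" and lam :: "nat list"
  assumes lam: "lam = a # r" "length r = n" and srt: "sorted_wrt (\<ge>) lam" and lt: "\<forall>e\<in>set lam. e < M"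
    and x: "x \<noteq> 0" "1 - \<beta> * x \<noteq> 0"
  defines "c \<equiv> groth_entry \<beta> M (Suc n) lam"
  shows "det (mat n n (\<lambda>(i, k). c k (u i) - c k x / c (Suc k) x * c (Suc k) (u i)))
    = (\<Prod>i<n. u i - x) / (1 - \<beta> * x) ^ (a - lam!n)
      * (\<Sum>mu\<in>interlacing a r. interlace_weight \<beta> x a r mu * groth_det \<beta> M n mu u)"
proof -
  have lenlam: "length lam = Suc n" using lam by simp
  define E where "E k y = (\<Sum>t\<in>{lam!(Suc k)..lam!k}. x ^ (lam!k - t) * (1 - \<beta> * x) ^ (t - lam!(Suc k) - 1)
      * (y ^ (t + (n - 1 - k)) * (1 - \<beta> * y) ^ (M - 1 - t)))" for k y
  have entry: "c k (u i) - c k x / c (Suc k) x * c (Suc k) (u i)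
      = (u i - x) * (1 / (1 - \<beta> * x) ^ (lam!k - lam!(Suc k))) * E k (u i)" if k: "k < n" for i k
  proof -
    have "lam!(Suc k) \<le> lam!k" using sorted_wrt_nth_less[OF srt, of k "Suc k"] lenlam k by simp
    moreover have "lam!k < M" using lt lenlam k nth_mem[of k lam] by simp
    moreover have "Suc n - 1 - k = Suc (n - 1 - k)" "Suc n - 1 - Suc k = n - 1 - k" using k by auto
    ultimately show ?thesis
      unfolding c_def groth_entry_def E_def
      using reduced_column_entry[OF _ _ x, where e="n - 1 - k" and y="u i"] by simp
  qed
  have tel: "(\<Prod>k<n. 1 / (1 - \<beta> * x) ^ (lam!k - lam!(Suc k))) = 1 / (1 - \<beta> * x) ^ (a - lam!n)"
  proof -
    have "(\<Prod>k<n. (1 - \<beta> * x) ^ (lam!k - lam!(Suc k))) = (1 - \<beta> * x) ^ (\<Sum>k<n. lam!k - lam!(Suc k))"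
      by (simp add: power_sum)
    also have "(\<Sum>k<n. lam!k - lam!(Suc k)) = a - lam!n" using sum_sorted_steps[OF srt lenlam, of n] lam by simp
    finally show ?thesis by (simp add: prod_dividef)
  qed
  define T where "T k = {lam!(Suc k)..lam!k}" for k
  define w where "w k t = x ^ (lam!k - t) * (1 - \<beta> * x) ^ (t - lam!(Suc k) - 1)" for k t
  define g where "g k t i = u i ^ (t + (n - 1 - k)) * (1 - \<beta> * u i) ^ (M - 1 - t)" for k t i
  have T: "choice_lists n T = interlacing a r"
  proof -
    have "T = (\<lambda>k. {r!k .. (a#r)!k})" by (rule ext) (simp add: T_def lam)
    then show ?thesis using choice_lists_interlacing[OF lam(2)] by simp
  qed
  have w: "(\<Prod>k<n. w k (mu!k)) = interlace_weight \<beta> x a r mu" if "mu \<in> interlacing a r" for mu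
    using interlace_weight_prod[OF length_interlacing[OF that], of \<beta> x a] lam by (simp add: w_def)
  have g: "det (mat n n (\<lambda>(i, k). g k (mu!k) i)) = groth_det \<beta> M n mu u" for mu
    unfolding groth_det_def by (rule arg_cong[where f=det]) (rule eq_matI, auto simp: g_def groth_entry_def)
  have "det (mat n n (\<lambda>(i, k). c k (u i) - c k x / c (Suc k) x * c (Suc k) (u i)))
      = det (mat n n (\<lambda>(i, k). (u i - x) * (1 / (1 - \<beta> * x) ^ (lam!k - lam!(Suc k))) * E k (u i)))"
    by (rule arg_cong[where f=det]) (rule eq_matI, auto simp: entry simp del: times_divide_eq_left)
  also have "\<dots> = (\<Prod>i<n. u i - x) * (\<Prod>k<n. 1 / (1 - \<beta> * x) ^ (lam!k - lam!(Suc k)))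
      * det (mat n n (\<lambda>(i, k). \<Sum>t\<in>T k. w k t * g k t i))"
    unfolding det_mat_scale by (simp add: E_def T_def w_def g_def mult.assoc)
  also have "det (mat n n (\<lambda>(i, k). \<Sum>t\<in>T k. w k t * g k t i))
      = (\<Sum>mu\<in>choice_lists n T. (\<Prod>k<n. w k (mu!k)) * det (mat n n (\<lambda>(i, k). g k (mu!k) i)))"
    by (rule det_mat_column_sums) (simp add: T_def)
  also have "\<dots> = (\<Sum>mu\<in>interlacing a r. interlace_weight \<beta> x a r mu * groth_det \<beta> M n mu u)"
    unfolding T g by (intro sum.cong refl) (simp add: w)
  finally show ?thesis unfolding tel by simp
qed

lemma groth_det_branching:
  fixes u :: "nat \<Rightarrow> complex" and lam :: "nat list"
  assumes lam: "lam = a # r" "length r = n" and srt: "sorted_wrt (\<ge>) lam" and lt: "\<forall>e\<in>set lam. e < M"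
    and x: "u 0 \<noteq> 0" "1 - \<beta> * u 0 \<noteq> 0"
  shows "groth_det \<beta> M (Suc n) lam u
    = (\<Prod>j<n. u 0 - u (Suc j)) * branch_B \<beta> M (u 0) lam (\<lambda>mu. groth_det \<beta> M n mu (u \<circ> Suc))"
proof -
  define c where "c = groth_entry \<beta> M (Suc n) lam"
  define S where "S = (\<Sum>mu\<in>interlacing a r. interlace_weight \<beta> (u 0) a r mu * groth_det \<beta> M n mu (u \<circ> Suc))"
  have "lam!n \<le> a"
    using sorted_wrt_nth_less[OF srt, of 0 n] lam by (cases n) auto
  moreover have "a < M" using lt lam by simp
  ultimately have cn: "c n (u 0) = u 0 ^ (lam!n) * (1 - \<beta> * u 0) ^ (M - 1 - a) * (1 - \<beta> * u 0) ^ (a - lam!n)"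
    by (simp add: c_def groth_entry_def power_add[symmetric])
  have "groth_det \<beta> M (Suc n) lam u = c n (u 0) * (-1) ^ n *
      det (mat n n (\<lambda>(i, k). c k ((u \<circ> Suc) i) - c k (u 0) / c (Suc k) (u 0) * c (Suc k) ((u \<circ> Suc) i)))"
    unfolding groth_det_def c_def using x
    by (subst det_eliminate_first_row) (simp_all add: groth_entry_def)
  also have "\<dots> = c n (u 0) * (-1) ^ n * ((\<Prod>i<n. u (Suc i) - u 0) / (1 - \<beta> * u 0) ^ (a - lam!n) * S)"
    unfolding c_def S_def groth_det_reduced_minor[OF lam srt lt x] by (simp add: o_def)
  also have "\<dots> = ((\<Prod>i<n. u (Suc i) - u 0) * (-1) ^ n) * (u 0 ^ last (a # r) * (1 - \<beta> * u 0) ^ (M - 1 - a) * S)"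
    using x last_conv_nth[of "a # r"] lam(2) by (simp add: cn lam(1) field_simps)
  also have "\<dots> = (\<Prod>j<n. u 0 - u (Suc j)) * branch_B \<beta> M (u 0) lam (\<lambda>mu. groth_det \<beta> M n mu (u \<circ> Suc))"
    unfolding prod_diff_flip by (simp add: branch_B_def S_def lam sum_distrib_left mult_ac)
  finally show ?thesis .
qed

lemma branch_sum_vandermonde:
  fixes u :: "nat \<Rightarrow> complex" and lam :: "nat list"
  assumes "sorted_wrt (\<ge>) lam" "length lam = N" "\<forall>e\<in>set lam. e < M"
    "\<forall>i<N. u i \<noteq> 0 \<and> 1 - \<beta> * u i \<noteq> 0"
  shows "branch_sum \<beta> M N u lam * vandermonde N u = groth_det \<beta> M N lam u"
  using assms
proof (induction N arbitrary: u lam)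
  case 0
  then show ?case by (simp add: vandermonde_def groth_det_def)
next
  case (Suc n)
  then obtain a r where lam: "lam = a # r" "length r = n" by (cases lam) auto
  have IH: "branch_sum \<beta> M n (u \<circ> Suc) mu * vandermonde n (u \<circ> Suc) = groth_det \<beta> M n mu (u \<circ> Suc)"
    if "mu \<in> interlacing a r" for mu
  proof -
    have "sorted_wrt (\<ge>) mu" using interlacing_sorted[OF that] .
    moreover have "length mu = n" using length_interlacing[OF that] lam by simp
    moreover have "\<forall>e\<in>set mu. e < M" using interlacing_le[OF that] Suc.prems(3) lam by fastforce
    moreover have "\<forall>i<n. (u \<circ> Suc) i \<noteq> 0 \<and> 1 - \<beta> * (u \<circ> Suc) i \<noteq> 0" using Suc.prems(4) by simp
    ultimately show ?thesis using Suc.IH by blast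
  qed
  have "branch_sum \<beta> M (Suc n) u lam * vandermonde (Suc n) u =
      (\<Prod>j<n. u 0 - u (Suc j)) * branch_B \<beta> M (u 0) lam (\<lambda>mu. vandermonde n (u \<circ> Suc) * branch_sum \<beta> M n (u \<circ> Suc) mu)"
    by (simp add: vandermonde_Suc branch_B_scale mult_ac)
  also have "\<dots> = (\<Prod>j<n. u 0 - u (Suc j)) * branch_B \<beta> M (u 0) lam (\<lambda>mu. groth_det \<beta> M n mu (u \<circ> Suc))"
    using IH lam by (auto intro!: branch_B_cong simp: mult.commute)
  also have "\<dots> = groth_det \<beta> M (Suc n) lam u"
    using groth_det_branching[OF lam Suc.prems(1,3)] Suc.prems(4) by simp
  finally show ?case .
qed

lemma branch_sum_replicate_0: "branch_sum \<beta> 1 N u (replicate N 0) = 1"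
proof (induction N arbitrary: u)
  case 0 then show ?case by simp
next
  case (Suc N)
  have "branch_sum \<beta> 1 (Suc N) u (replicate (Suc N) 0) = branch_sum \<beta> 1 N (u \<circ> Suc) (replicate N 0)"
    using interlacing_replicate_0[of N] interlace_weight_replicate[of \<beta> "u 0" 0 N "[]" "[]"] last_Cons_replicate[of 0 N "[]"]
    by (simp add: branch_B_def)
  then show ?case using Suc by simp
qed

lemma det_vandermonde:
  assumes "\<forall>i<N. u i \<noteq> 0"
  shows "det (mat N N (\<lambda>(i, k). u i ^ (N - 1 - k))) = vandermonde N u"
proof -
  have "branch_sum 0 1 N u (replicate N 0) * vandermonde N u = groth_det 0 1 N (replicate N 0) u"
    by (rule branch_sum_vandermonde) (use assms sorted_wrt_replicate in auto)
  moreover have "groth_det 0 1 N (replicate N 0) u = det (mat N N (\<lambda>(i, k). u i ^ (N - 1 - k)))"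
    unfolding groth_det_def by (rule arg_cong[where f=det]) (rule eq_matI, auto simp: groth_entry_def)
  ultimately show ?thesis using branch_sum_replicate_0[of 0 N u] by simp
qed

lemma branch_sum_rev_vandermonde:
  fixes lam :: "nat list"
  assumes "sorted_wrt (\<ge>) lam" "length lam = N" "\<forall>e\<in>set lam. e < M"
    and u: "\<forall>i<N. u i \<noteq> 0 \<and> 1 - \<beta> * u i \<noteq> 0"
  shows "branch_sum \<beta> M N (\<lambda>j. u (N - 1 - j)) lam * vandermonde N u = groth_det \<beta> M N lam u"
proof -
  let ?ur = "\<lambda>j. u (N - 1 - j)"
  have ur: "\<forall>i<N. ?ur i \<noteq> 0 \<and> 1 - \<beta> * ?ur i \<noteq> 0" using u by auto
  have A: "branch_sum \<beta> M N ?ur lam * vandermonde N ?ur = groth_det \<beta> M N lam ?ur"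
    by (rule branch_sum_vandermonde[OF assms(1-3) ur])
  have V: "vandermonde N ?ur = signof (reverse_perm N) * vandermonde N u"
  proof -
    have "vandermonde N ?ur = det (mat N N (\<lambda>(i, k). ?ur i ^ (N - 1 - k)))"
      using det_vandermonde[of N ?ur] ur by simp
    also have "\<dots> = signof (reverse_perm N) * det (mat N N (\<lambda>(i, k). u i ^ (N - 1 - k)))"
      using det_rev_rows[where f="\<lambda>y k. y ^ (N - 1 - k)" and N=N and u=u] by simp
    also have "det (mat N N (\<lambda>(i, k). u i ^ (N - 1 - k))) = vandermonde N u"
      using det_vandermonde[of N u] u by simp
    finally show ?thesis .
  qed
  have H: "groth_det \<beta> M N lam ?ur = signof (reverse_perm N) * groth_det \<beta> M N lam u"
    unfolding groth_det_def using det_rev_rows[where f="\<lambda>y k. groth_entry \<beta> M N lam k y" and N=N and u=u] by simp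
  from A V H have "signof (reverse_perm N) * (branch_sum \<beta> M N ?ur lam * vandermonde N u) = signof (reverse_perm N) * groth_det \<beta> M N lam u"
    by (simp add: mult_ac)
  then show ?thesis using signof_nonzero[of "reverse_perm N"] by simp
qed

section \<open>Change of variables and continuation to coinciding points\<close>

(* z \<mapsto> z / (1 + beta z) sends the spectral parameter z_j to v_j^2 *)
definition uvar :: "complex \<Rightarrow> nat \<Rightarrow> (nat \<Rightarrow> complex) \<Rightarrow> nat \<Rightarrow> complex" where
  "uvar \<beta> N w j = (if j < N then w j / (1 + \<beta> * w j) else 0)"

lemma one_minus_beta_uvar:
  assumes "j < N" "1 + \<beta> * w j \<noteq> 0"
  shows "1 - \<beta> * uvar \<beta> N w j = 1 / (1 + \<beta> * w j)"
  using assms by (simp add: uvar_def field_simps)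

lemma uvar_admissible:
  assumes "\<forall>j<N. w j \<noteq> 0 \<and> 1 + \<beta> * w j \<noteq> 0"
  shows "\<forall>i<N. uvar \<beta> N w i \<noteq> 0 \<and> 1 - \<beta> * uvar \<beta> N w i \<noteq> 0"
  using assms by (simp add: one_minus_beta_uvar) (simp add: uvar_def)

lemma vandermonde_uvar:
  assumes "\<forall>j<N. 1 + \<beta> * w j \<noteq> 0" "\<forall>j<N. u j = w j / (1 + \<beta> * w j)"
  shows "vandermonde N w = vandermonde N u * (\<Prod>j<N. (1 + \<beta> * w j) ^ (N - 1))"
  using assms
proof (induction N arbitrary: w u)
  case 0 then show ?case by (simp add: vandermonde_def)
next
  case (Suc n)
  define D where "D j = 1 + \<beta> * w j" for j
  have Dnz: "j < Suc n \<Longrightarrow> D j \<noteq> 0" for j using Suc.prems D_def by auto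
  have fac: "w 0 - w (Suc j) = (u 0 - u (Suc j)) * D 0 * D (Suc j)" if "j < n" for j
  proof -
    have "u 0 = w 0 / D 0" "u (Suc j) = w (Suc j) / D (Suc j)" using Suc.prems that by (auto simp: D_def)
    then show ?thesis using Dnz[of 0] Dnz[of "Suc j"] that by (simp add: field_simps D_def)
  qed
  have IH: "vandermonde n (w \<circ> Suc) = vandermonde n (u \<circ> Suc) * (\<Prod>j<n. D (Suc j) ^ (n - 1))"
    using Suc.IH[of "w \<circ> Suc" "u \<circ> Suc"] Suc.prems by (simp add: D_def o_def)
  have "vandermonde (Suc n) w = (\<Prod>j<n. (u 0 - u (Suc j)) * D 0 * D (Suc j)) * vandermonde n (w \<circ> Suc)"
    by (simp add: vandermonde_Suc fac)
  also have "\<dots> = ((\<Prod>j<n. u 0 - u (Suc j)) * vandermonde n (u \<circ> Suc)) * (D 0 ^ n * (\<Prod>j<n. D (Suc j) * D (Suc j) ^ (n - 1)))"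
    by (simp add: IH prod.distrib mult_ac)
  also have "(\<Prod>j<n. D (Suc j) * D (Suc j) ^ (n - 1)) = (\<Prod>j<n. D (Suc j) ^ n)"
    by (intro prod.cong refl) (metis Suc_pred' gr_implies_not0 lessThan_iff not_less_zero power_Suc zero_less_iff_neq_zero)
  also have "D 0 ^ n * (\<Prod>j<n. D (Suc j) ^ n) = (\<Prod>j<Suc n. D j ^ (Suc n - 1))"
    by (simp add: prod.lessThan_Suc_shift del: prod.lessThan_Suc)
  finally show ?case by (simp add: vandermonde_Suc D_def o_def)
qed

lemma vandermonde_nonzero:
  assumes "inj_on w {..<N}"
  shows "vandermonde N w \<noteq> 0"
proof -
  have "finite {(j, k). j < k \<and> k < N}" by (rule finite_subset[of _ "{..<N} \<times> {..<N}"]) auto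
  then show ?thesis using assms unfolding vandermonde_def by (auto simp: inj_on_def)
qed

lemma power_rescale:
  fixes d w :: complex
  assumes "d \<noteq> 0"
  shows "d ^ (k + (a + m)) * ((w / d) ^ a * (1 / d) ^ m) = w ^ a * d ^ k"
proof -
  have "d ^ (k + (a + m)) = d ^ k * (d ^ a * d ^ m)" by (simp add: power_add)
  moreover have "(w / d) ^ a = w ^ a / d ^ a" by (rule power_divide)
  moreover have "(1 / d) ^ m = 1 / d ^ m" by (simp add: power_one_over)
  moreover have "d ^ a \<noteq> 0" "d ^ m \<noteq> 0" using assms by auto
  ultimately show ?thesis using assms by (simp add: field_simps)
qed

lemma groth_matrix_uvar:
  fixes w :: "nat \<Rightarrow> complex" and lam :: "nat list"
  assumes D: "\<forall>j<N. 1 + \<beta> * w j \<noteq> 0" and len: "length lam = N" and lt: "\<forall>e\<in>set lam. e < M"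
  shows "det (mat N N (\<lambda>(j, k). w j ^ (lam!k + (N - 1 - k)) * (1 + \<beta> * w j) ^ k))
    = (\<Prod>j<N. (1 + \<beta> * w j) ^ (M - 1 + (N - 1))) * groth_det \<beta> M N lam (uvar \<beta> N w)"
proof -
  have entry: "w j ^ (lam!k + (N - 1 - k)) * (1 + \<beta> * w j) ^ k
      = (1 + \<beta> * w j) ^ (M - 1 + (N - 1)) * 1 * groth_entry \<beta> M N lam k (uvar \<beta> N w j)"
    if j: "j < N" and k: "k < N" for j k
  proof -
    have "lam!k < M" using lt len k by (simp add: nth_mem)
    then have "M - 1 + (N - 1) = k + ((lam!k + (N - 1 - k)) + (M - 1 - lam!k))" using k by simp
    then show ?thesis
      using power_rescale[of "1 + \<beta> * w j" k "lam!k + (N - 1 - k)" "M - 1 - lam!k" "w j"] D j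
      by (simp add: groth_entry_def one_minus_beta_uvar) (simp add: uvar_def)
  qed
  have "mat N N (\<lambda>(j, k). w j ^ (lam!k + (N - 1 - k)) * (1 + \<beta> * w j) ^ k)
      = mat N N (\<lambda>(j, k). (1 + \<beta> * w j) ^ (M - 1 + (N - 1)) * 1 * groth_entry \<beta> M N lam k (uvar \<beta> N w j))"
    by (rule eq_matI) (simp_all only: index_mat entry dim_row_mat dim_col_mat prod.case)
  then show ?thesis
    using det_mat_scale[of N "\<lambda>j. (1 + \<beta> * w j) ^ (M - 1 + (N - 1))" "\<lambda>k. 1"
        "\<lambda>j k. groth_entry \<beta> M N lam k (uvar \<beta> N w j)"]
    by (simp add: groth_det_def)
qed

lemma groth_ratio_uvar:
  fixes w :: "nat \<Rightarrow> complex" and lam :: "nat list"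
  assumes valid: "\<forall>j<N. w j \<noteq> 0 \<and> 1 + \<beta> * w j \<noteq> 0" and inj: "inj_on w {..<N}"
    and len: "length lam = N" and lt: "\<forall>e\<in>set lam. e < M"
    and HA: "\<And>u. \<forall>i<N. u i \<noteq> 0 \<and> 1 - \<beta> * u i \<noteq> 0 \<Longrightarrow> \<Phi> u * vandermonde N u = groth_det \<beta> M N lam u"
  shows "groth_ratio N lam \<beta> w = \<Phi> (uvar \<beta> N w) * (\<Prod>j<N. (1 + \<beta> * w j) ^ (M - 1))"
proof -
  let ?u = "uvar \<beta> N w" and ?D = "\<lambda>j. 1 + \<beta> * w j"
  have D: "\<forall>j<N. ?D j \<noteq> 0" using valid by simp
  have V: "vandermonde N w = vandermonde N ?u * (\<Prod>j<N. ?D j ^ (N - 1))"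
    using D by (intro vandermonde_uvar) (auto simp: uvar_def)
  then have nz: "vandermonde N ?u * (\<Prod>j<N. ?D j ^ (N - 1)) \<noteq> 0"
    using vandermonde_nonzero[OF inj] by simp
  have "groth_ratio N lam \<beta> w
      = (\<Prod>j<N. ?D j ^ (M - 1 + (N - 1))) * groth_det \<beta> M N lam ?u / vandermonde N w"
    unfolding groth_ratio_def groth_matrix_uvar[OF D len lt] ..
  also have "\<dots> = ((\<Prod>j<N. ?D j ^ (M - 1)) * \<Phi> ?u) * (vandermonde N ?u * (\<Prod>j<N. ?D j ^ (N - 1)))
        / (vandermonde N ?u * (\<Prod>j<N. ?D j ^ (N - 1)))"
    unfolding V HA[OF uvar_admissible[OF valid], symmetric] power_add prod.distrib by (simp only: mult_ac)
  also have "\<dots> = \<Phi> ?u * (\<Prod>j<N. ?D j ^ (M - 1))"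
    using nz by (simp add: mult.commute)
  finally show ?thesis .
qed

definition coordwise_continuous :: "((nat \<Rightarrow> complex) \<Rightarrow> complex) \<Rightarrow> bool" where
  "coordwise_continuous \<Phi> \<longleftrightarrow> (\<forall>(F :: (nat \<Rightarrow> complex) filter) f g. (\<forall>j. ((\<lambda>x. f x j) \<longlongrightarrow> g j) F) \<longrightarrow> ((\<lambda>x. \<Phi> (f x)) \<longlongrightarrow> \<Phi> g) F)"

lemma tendsto_interlace_weight:
  assumes "(h \<longlongrightarrow> c) F"
  shows "((\<lambda>y. interlace_weight \<beta> (h y) a r mu) \<longlongrightarrow> interlace_weight \<beta> c a r mu) F"
proof (induction r arbitrary: a mu)
  case Nil then show ?case by (cases mu) auto
next
  case (Cons b r)
  show ?case
  proof (cases mu)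
    case Nil then show ?thesis by simp
  next
    case (Cons y mu')
    show ?thesis unfolding Cons interlace_weight.simps
      by (intro tendsto_intros assms Cons.IH)
  qed
qed

lemma coordwise_continuous_branch_sum: "coordwise_continuous (\<lambda>u. branch_sum \<beta> M N u lam)"
proof (induction N arbitrary: lam)
  case 0 then show ?case by (simp add: coordwise_continuous_def)
next
  case (Suc N)
  show ?case unfolding coordwise_continuous_def
  proof (intro allI impI)
    fix F :: "(nat \<Rightarrow> complex) filter" and f :: "(nat \<Rightarrow> complex) \<Rightarrow> nat \<Rightarrow> complex" and g :: "nat \<Rightarrow> complex"
    assume fg: "\<forall>j. ((\<lambda>x. f x j) \<longlongrightarrow> g j) F"
    have IH: "((\<lambda>x. branch_sum \<beta> M N (f x \<circ> Suc) mu) \<longlongrightarrow> branch_sum \<beta> M N (g \<circ> Suc) mu) F" for mu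
      using Suc[of mu] fg unfolding coordwise_continuous_def by (auto simp: o_def)
    have f0: "((\<lambda>x. f x 0) \<longlongrightarrow> g 0) F" using fg by simp
    show "((\<lambda>x. branch_sum \<beta> M (Suc N) (f x) lam) \<longlongrightarrow> branch_sum \<beta> M (Suc N) g lam) F"
    proof (cases lam)
      case Nil then show ?thesis by (simp add: branch_B_def)
    next
      case (Cons a r)
      show ?thesis unfolding Cons branch_sum.simps branch_B_def list.case
        by (intro tendsto_intros tendsto_interlace_weight f0 IH)
    qed
  qed
qed

lemma coordwise_continuous_rev: "coordwise_continuous \<Phi> \<Longrightarrow> coordwise_continuous (\<lambda>u. \<Phi> (\<lambda>j. u (N - 1 - j)))"
  unfolding coordwise_continuous_def by auto

lemma tendsto_coordinate: "((\<lambda>w::nat \<Rightarrow> complex. w j) \<longlongrightarrow> z j) (at z within S)"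
proof -
  have c: "continuous_on UNIV (\<lambda>w::nat \<Rightarrow> complex. w j)" by (rule continuous_on_product_coordinates)
  have "continuous (at z within UNIV) (\<lambda>w::nat \<Rightarrow> complex. w j)"
    using c unfolding continuous_on_eq_continuous_within by blast
  then have "isCont (\<lambda>w::nat \<Rightarrow> complex. w j) z" by simp
  then have "continuous (at z within S) (\<lambda>w::nat \<Rightarrow> complex. w j)" by (rule continuous_at_imp_continuous_at_within)
  then show ?thesis unfolding continuous_within by simp
qed

lemma tendsto_uvar:
  assumes "\<forall>j<N. 1 + \<beta> * z j \<noteq> 0"
  shows "((\<lambda>w. uvar \<beta> N w j) \<longlongrightarrow> uvar \<beta> N z j) (at z within S)"
proof (cases "j < N")
  case True
  have "((\<lambda>w. w j / (1 + \<beta> * w j)) \<longlongrightarrow> z j / (1 + \<beta> * z j)) (at z within S)"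
    using assms True by (intro tendsto_intros tendsto_coordinate) auto
  then show ?thesis using True by (simp add: uvar_def)
qed (simp add: uvar_def)

lemma eventually_admissible:
  fixes z :: "nat \<Rightarrow> complex"
  assumes "\<forall>j<N. z j \<noteq> 0 \<and> 1 + \<beta> * z j \<noteq> 0"
  shows "eventually (\<lambda>w. \<forall>j<N. w j \<noteq> 0 \<and> 1 + \<beta> * w j \<noteq> 0) (at z within S)"
proof -
  have "eventually (\<lambda>w. w j \<noteq> 0 \<and> 1 + \<beta> * w j \<noteq> 0) (at z within S)" if "j \<in> {..<N}" for j
  proof -
    have "((\<lambda>w. w j) \<longlongrightarrow> z j) (at z within S)" "((\<lambda>w. 1 + \<beta> * w j) \<longlongrightarrow> 1 + \<beta> * z j) (at z within S)"
      by (intro tendsto_intros tendsto_coordinate)+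
    then show ?thesis
      using assms that by (intro eventually_conj) (auto dest: tendsto_imp_eventually_ne)
  qed
  then have "eventually (\<lambda>w. \<forall>j\<in>{..<N}. w j \<noteq> 0 \<and> 1 + \<beta> * w j \<noteq> 0) (at z within S)"
    by (intro eventually_ball_finite) auto
  then show ?thesis by (simp add: Ball_def)
qed

lemma inj_on_linear_perturbation:
  fixes z :: "nat \<Rightarrow> complex"
  assumes "t \<notin> (\<lambda>(j, k). (z k - z j) / (of_nat j - of_nat k)) ` ({..<N} \<times> {..<N})"
  shows "inj_on (\<lambda>j. z j + t * of_nat (Suc j)) {..<N}"
proof (rule inj_onI, rule ccontr)
  fix j k assume jk: "j \<in> {..<N}" "k \<in> {..<N}" "z j + t * of_nat (Suc j) = z k + t * of_nat (Suc k)" "j \<noteq> k"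
  then have "t * (of_nat j - of_nat k) = z k - z j" by (simp add: algebra_simps)
  then have "t = (z k - z j) / (of_nat j - of_nat k)" using jk(4) by (simp add: field_simps)
  then show False using assms jk(1,2) by auto
qed

lemma islimpt_injective_perturbations:
  fixes z :: "nat \<Rightarrow> complex"
  assumes "0 < N"
  shows "z islimpt {w. inj_on w {..<N} \<and> (\<forall>k\<ge>N. w k = z k)}"
proof (rule islimptI)
  fix T :: "(nat \<Rightarrow> complex) set" assume "z \<in> T" "open T"
  define \<gamma> where "\<gamma> t = (\<lambda>j. z j + (if j < N then t * of_nat (Suc j) else 0))" for t :: complex
  have "continuous_on UNIV \<gamma>"
  proof (rule continuous_on_coordinatewise_then_product)
    fix i show "continuous_on UNIV (\<lambda>t. \<gamma> t i)"
      by (cases "i < N") (auto simp: \<gamma>_def intro!: continuous_intros)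
  qed
  then have "open (\<gamma> -` T)" using \<open>open T\<close> continuous_on_open_vimage[of UNIV \<gamma>] by auto
  moreover have "\<gamma> 0 = z" by (rule ext) (simp add: \<gamma>_def)
  then have "0 \<in> \<gamma> -` T" using \<open>z \<in> T\<close> by simp
  ultimately obtain \<epsilon> where "\<epsilon> > 0" and \<epsilon>: "ball 0 \<epsilon> \<subseteq> \<gamma> -` T" using open_contains_ball by blast
  define B where "B = insert 0 ((\<lambda>(j, k). (z k - z j) / (of_nat j - of_nat k)) ` ({..<N} \<times> {..<N}))"
  have "infinite (ball (0::complex) \<epsilon>)"
    using islimpt_eq_infinite_ball[of 0 UNIV] islimpt_UNIV \<open>\<epsilon> > 0\<close> by auto
  then have "infinite (ball 0 \<epsilon> - B)" by (rule Diff_infinite_finite[rotated]) (simp add: B_def)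
  then obtain t where t: "t \<in> ball 0 \<epsilon>" "t \<notin> B" by (metis Diff_iff finite.emptyI ex_in_conv)
  have "inj_on (\<gamma> t) {..<N} \<longleftrightarrow> inj_on (\<lambda>j. z j + t * of_nat (Suc j)) {..<N}"
    by (rule inj_on_cong) (simp add: \<gamma>_def)
  then have "inj_on (\<gamma> t) {..<N}" using inj_on_linear_perturbation t(2) by (simp add: B_def)
  moreover have "\<gamma> t \<in> T" using t(1) \<epsilon> by auto
  moreover have "\<gamma> t \<noteq> z"
  proof
    assume "\<gamma> t = z"
    then have "\<gamma> t 0 = z 0" by simp
    then show False using t(2) \<open>0 < N\<close> by (simp add: B_def \<gamma>_def)
  qed
  ultimately show "\<exists>w\<in>{w. inj_on w {..<N} \<and> (\<forall>k\<ge>N. w k = z k)}. w \<in> T \<and> w \<noteq> z"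
    by (intro bexI[of _ "\<gamma> t"]) (auto simp: \<gamma>_def)
qed

lemma grothendieck_uvar:
  fixes z :: "nat \<Rightarrow> complex" and lam :: "nat list"
  assumes valid: "\<forall>j<N. z j \<noteq> 0 \<and> 1 + \<beta> * z j \<noteq> 0"
    and len: "length lam = N" and lt: "\<forall>e\<in>set lam. e < M"
    and HA: "\<And>u. \<forall>i<N. u i \<noteq> 0 \<and> 1 - \<beta> * u i \<noteq> 0 \<Longrightarrow> \<Phi> u * vandermonde N u = groth_det \<beta> M N lam u"
    and cont: "coordwise_continuous \<Phi>"
  shows "grothendieck N lam \<beta> z = \<Phi> (uvar \<beta> N z) * (\<Prod>j<N. (1 + \<beta> * z j) ^ (M - 1))"
proof (cases "inj_on z {..<N}")
  case True
  then show ?thesis using groth_ratio_uvar[OF valid True len lt HA] by (simp add: grothendieck_def)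
next
  case False
  then have "0 < N" by (cases N) auto
  define S where "S = {w. inj_on w {..<N} \<and> (\<forall>k\<ge>N. w k = z k)}"
  define \<Psi> where "\<Psi> w = \<Phi> (uvar \<beta> N w) * (\<Prod>j<N. (1 + \<beta> * w j) ^ (M - 1))" for w
  have nontrivial: "\<not> trivial_limit (at z within S)"
    using islimpt_injective_perturbations[OF \<open>0 < N\<close>, of z] trivial_limit_within S_def by auto
  have "((\<lambda>w. uvar \<beta> N w j) \<longlongrightarrow> uvar \<beta> N z j) (at z within S)" for j
    using valid by (intro tendsto_uvar) auto
  then have "((\<lambda>w. \<Phi> (uvar \<beta> N w)) \<longlongrightarrow> \<Phi> (uvar \<beta> N z)) (at z within S)"
    using cont unfolding coordwise_continuous_def by blast
  then have "(\<Psi> \<longlongrightarrow> \<Psi> z) (at z within S)"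
    unfolding \<Psi>_def by (intro tendsto_intros tendsto_coordinate)
  moreover have "eventually (\<lambda>w. w \<in> S) (at z within S)" by (simp add: eventually_at_filter)
  then have "eventually (\<lambda>w. \<Psi> w = groth_ratio N lam \<beta> w) (at z within S)"
    using eventually_admissible[OF valid]
  proof eventually_elim
    case (elim w)
    then show ?case using groth_ratio_uvar[OF _ _ len lt HA, of w] by (simp add: \<Psi>_def S_def)
  qed
  ultimately have "(groth_ratio N lam \<beta> \<longlongrightarrow> \<Psi> z) (at z within S)" by (rule Lim_transform_eventually)
  then have "Lim (at z within S) (groth_ratio N lam \<beta>) = \<Psi> z" by (rule tendsto_Lim[OF nontrivial])
  then show ?thesis using False by (simp add: grothendieck_def S_def \<Psi>_def)
qed

section \<open>The spectral parameters\<close>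

lemma one_minus_beta_square_nonzero:
  fixes \<beta> v :: complex
  assumes "v \<noteq> 0" "inverse (v ^ 2) \<noteq> \<beta>"
  shows "1 - \<beta> * v^2 \<noteq> 0"
proof
  assume "1 - \<beta> * v^2 = 0"
  then have "\<beta> = inverse (v^2)" using assms(1) by (simp add: field_simps)
  then show False using assms(2) by simp
qed

lemma spectral_z_eq:
  fixes \<beta> v :: complex
  assumes "v \<noteq> 0" "inverse (v ^ 2) \<noteq> \<beta>"
  shows "inverse (inverse (v ^ 2) - \<beta>) = v^2 / (1 - \<beta> * v^2)"
  using assms one_minus_beta_square_nonzero[OF assms] by (simp add: field_simps inverse_eq_divide)

lemma one_plus_beta_spectral_z:
  fixes \<beta> v :: complex
  assumes "v \<noteq> 0" "inverse (v ^ 2) \<noteq> \<beta>"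
  shows "1 + \<beta> * inverse (inverse (v ^ 2) - \<beta>) = 1 / (1 - \<beta> * v^2)"
  unfolding spectral_z_eq[OF assms] using one_minus_beta_square_nonzero[OF assms]
  by (simp add: field_simps)

lemma spectral_z_admissible:
  fixes v :: "nat \<Rightarrow> complex"
  assumes "\<forall>j<N. v j \<noteq> 0" "\<forall>j<N. inverse (v j ^ 2) \<noteq> \<beta>"
  shows "\<forall>j<N. inverse (inverse (v j ^ 2) - \<beta>) \<noteq> 0 \<and> 1 + \<beta> * inverse (inverse (v j ^ 2) - \<beta>) \<noteq> 0"
proof (intro allI impI)
  fix j assume j: "j < N"
  then have "v j \<noteq> 0" "inverse (v j ^ 2) \<noteq> \<beta>" using assms by auto
  moreover note one_minus_beta_square_nonzero[OF this]
  ultimately show "inverse (inverse (v j ^ 2) - \<beta>) \<noteq> 0 \<and> 1 + \<beta> * inverse (inverse (v j ^ 2) - \<beta>) \<noteq> 0"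
    by (simp add: spectral_z_eq field_simps)
qed

lemma uvar_spectral_z:
  assumes "\<forall>j<N. v j \<noteq> 0" "\<forall>j<N. inverse (v j ^ 2) \<noteq> \<beta>" "j < N"
  shows "uvar \<beta> N (\<lambda>j. inverse (inverse (v j ^ 2) - \<beta>)) j = v j ^ 2"
proof -
  have v: "v j \<noteq> 0" "inverse (v j ^ 2) \<noteq> \<beta>" using assms by auto
  have "uvar \<beta> N (\<lambda>j. inverse (inverse (v j ^ 2) - \<beta>)) j
      = inverse (inverse (v j ^ 2) - \<beta>) / (1 + \<beta> * inverse (inverse (v j ^ 2) - \<beta>))"
    using assms(3) by (simp add: uvar_def)
  also have "\<dots> = v j ^ 2"
    using v one_minus_beta_square_nonzero[OF v]
    by (simp add: one_plus_beta_spectral_z spectral_z_eq field_simps)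
  finally show ?thesis .
qed

lemma spectral_prefactor:
  fixes \<beta> v :: complex
  assumes "v \<noteq> 0" "inverse (v ^ 2) \<noteq> \<beta>" "M \<ge> 1"
  shows "(inverse v - \<beta> * v) ^ (M - 1) * (1 + \<beta> * inverse (inverse (v ^ 2) - \<beta>)) ^ (M - 1) * v ^ M = v"
proof -
  have "(inverse v - \<beta> * v) * (1 + \<beta> * inverse (inverse (v ^ 2) - \<beta>)) = inverse v"
    using assms one_minus_beta_square_nonzero[OF assms(1,2)]
    by (simp add: one_plus_beta_spectral_z field_simps power2_eq_square)
  then have "(inverse v - \<beta> * v) ^ (M - 1) * (1 + \<beta> * inverse (inverse (v ^ 2) - \<beta>)) ^ (M - 1)
      = inverse v ^ (M - 1)"
    by (metis power_mult_distrib)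
  moreover have "inverse v ^ (M - 1) * v ^ M = v"
    using assms by (cases M) (simp_all add: power_inverse[symmetric] field_simps)
  ultimately show ?thesis by simp
qed

lemma amplitude_eq_prefactor_times:
  fixes amp G A \<beta> :: complex and v :: "nat \<Rightarrow> complex"
  assumes "M \<ge> 1" "\<forall>j<N. v j \<noteq> 0" "\<forall>j<N. inverse (v j ^ 2) \<noteq> \<beta>"
    and amp: "amp * (\<Prod>j<N. v j ^ M) = (\<Prod>j<N. v j) * A"
    and G: "G = A * (\<Prod>j<N. (1 + \<beta> * inverse (inverse (v j ^ 2) - \<beta>)) ^ (M - 1))"
  shows "amp = (\<Prod>j<N. (inverse (v j) - \<beta> * v j) ^ (M - 1)) * G"
proof -
  have "(\<Prod>j<N. (inverse (v j) - \<beta> * v j) ^ (M - 1)) * G * (\<Prod>j<N. v j ^ M)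
      = A * (\<Prod>j<N. (inverse (v j) - \<beta> * v j) ^ (M - 1)
               * (1 + \<beta> * inverse (inverse (v j ^ 2) - \<beta>)) ^ (M - 1) * v j ^ M)"
    by (simp add: G prod.distrib mult_ac)
  also have "\<dots> = A * (\<Prod>j<N. v j)"
    using assms(1-3) spectral_prefactor by (auto intro!: prod.cong)
  finally have "(\<Prod>j<N. (inverse (v j) - \<beta> * v j) ^ (M - 1)) * G * (\<Prod>j<N. v j ^ M)
      = amp * (\<Prod>j<N. v j ^ M)"
    using amp by (simp add: mult.commute)
  moreover have "(\<Prod>j<N. v j ^ M) \<noteq> 0" using assms(2) by (auto simp: prod_zero_iff)
  ultimately show ?thesis by simp
qed

lemma amp_ket_eq_grothendieck:
  assumes "M \<ge> 1" "\<forall>j<N. v j \<noteq> 0" "\<forall>j<N. inverse (v j ^ 2) \<noteq> \<beta>"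
    and "length n = M" "sum_list n = N"
  shows "amp_ket \<beta> M N v n = (\<Prod>j<N. (inverse (v j) - \<beta> * v j) ^ (M - 1))
           * grothendieck N (partition_of n) \<beta> (\<lambda>j. inverse (inverse (v j ^ 2) - \<beta>))"
proof (rule amplitude_eq_prefactor_times[OF assms(1-3) amp_ket_branch_sum[OF assms(1,2,4)]])
  let ?z = "\<lambda>j. inverse (inverse (v j ^ 2) - \<beta>)" and ?lam = "partition_of n"
  note \<lambda> = partition_of_admissible[OF assms(4,5)]
  have "grothendieck N ?lam \<beta> ?z = branch_sum \<beta> M N (uvar \<beta> N ?z) ?lam * (\<Prod>j<N. (1 + \<beta> * ?z j) ^ (M - 1))"
    using spectral_z_admissible[OF assms(2,3)] \<lambda>(1,3) branch_sum_vandermonde[OF \<lambda>(2,1,3)]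
      coordwise_continuous_branch_sum by (rule grothendieck_uvar)
  also have "branch_sum \<beta> M N (uvar \<beta> N ?z) ?lam = branch_sum \<beta> M N (\<lambda>j. v j ^ 2) ?lam"
    by (rule branch_sum_cong) (simp add: uvar_spectral_z assms(2,3))
  finally show "grothendieck N ?lam \<beta> ?z = branch_sum \<beta> M N (\<lambda>j. v j ^ 2) ?lam * (\<Prod>j<N. (1 + \<beta> * ?z j) ^ (M - 1))" .
qed

lemma amp_bra_eq_grothendieck:
  assumes "M \<ge> 1" "\<forall>j<N. v j \<noteq> 0" "\<forall>j<N. inverse (v j ^ 2) \<noteq> \<beta>"
    and "length n = M" "sum_list n = N"
  shows "amp_bra \<beta> M N v n = (\<Prod>j<N. (inverse (v j) - \<beta> * v j) ^ (M - 1))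
           * grothendieck N (dual_partition M (partition_of n)) \<beta> (\<lambda>j. inverse (inverse (v j ^ 2) - \<beta>))"
proof (rule amplitude_eq_prefactor_times[OF assms(1-3) amp_bra_branch_sum[OF assms(1,2,4)]])
  let ?z = "\<lambda>j. inverse (inverse (v j ^ 2) - \<beta>)" and ?lam = "partition_of (rev n)"
  have dual: "dual_partition M (partition_of n) = ?lam" using partition_of_rev[OF assms(4)] by simp
  have "length (rev n) = M" "sum_list (rev n) = N" using assms(4,5) by auto
  note \<lambda> = partition_of_admissible[OF this]
  have "grothendieck N ?lam \<beta> ?z = branch_sum \<beta> M N (\<lambda>j. uvar \<beta> N ?z (N - 1 - j)) ?lam * (\<Prod>j<N. (1 + \<beta> * ?z j) ^ (M - 1))"
    using spectral_z_admissible[OF assms(2,3)] \<lambda>(1,3) branch_sum_rev_vandermonde[OF \<lambda>(2,1,3)]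
      coordwise_continuous_rev[OF coordwise_continuous_branch_sum]
    by (rule grothendieck_uvar[where \<Phi>="\<lambda>u. branch_sum \<beta> M N (\<lambda>j. u (N - 1 - j)) ?lam"])
  also have "branch_sum \<beta> M N (\<lambda>j. uvar \<beta> N ?z (N - 1 - j)) ?lam = branch_sum \<beta> M N (\<lambda>j. v (N - 1 - j) ^ 2) ?lam"
    by (rule branch_sum_cong) (simp add: uvar_spectral_z assms(2,3))
  finally show "grothendieck N (dual_partition M (partition_of n)) \<beta> ?z
      = branch_sum \<beta> M N (\<lambda>j. v (N - 1 - j) ^ 2) ?lam * (\<Prod>j<N. (1 + \<beta> * ?z j) ^ (M - 1))"
    unfolding dual .
qed

theorem mainTheorem8:
  fixes \<beta> :: complex and M N :: nat and v :: "nat \<Rightarrow> complex" and n :: "nat list"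
  assumes "M \<ge> 1"
    and "\<forall>j<N. v j \<noteq> 0"
    and "\<forall>j<N. inverse (v j ^ 2) \<noteq> \<beta>"
    and "length n = M"
    and "sum_list n = N"
  shows "amp_ket \<beta> M N v n =
           (\<Prod>j<N. (inverse (v j) - \<beta> * v j) ^ (M - 1))
           * grothendieck N (partition_of n) \<beta> (\<lambda>j. inverse (inverse (v j ^ 2) - \<beta>))
       \<and> amp_bra \<beta> M N v n =
           (\<Prod>j<N. (inverse (v j) - \<beta> * v j) ^ (M - 1))
           * grothendieck N (dual_partition M (partition_of n)) \<beta> (\<lambda>j. inverse (inverse (v j ^ 2) - \<beta>))"
  using amp_ket_eq_grothendieck[OF assms] amp_bra_eq_grothendieck[OF assms] by simp

end
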